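(* Let $x=(x_1,\dots,x_n)$ be a vector of variables, $f=(f_1,\dots,f_n)$ a vector of differential-free terms, and let $y=(y_1,\dots,y_n)$ be fresh variables (not occurring in $f$, in the domain constraints below, or in $e$). Then all instances of the following three formulas are valid: (Uniq) $\big(\langle x'=f(x)\,\&\,Q_1\rangle P\big)\wedge\big(\langle x'=f(x)\,\&\,Q_2\rangle P\big)\leftrightarrow \langle x'=f(x)\,\&\,Q_1\wedge Q_2\rangle P$, for semianalytic formulas $Q_1,Q_2$ and any formula $P$; (Cont) $x=y\rightarrow\big(\langle x'=f(x)\,\&\,e>0\rangle\, x\neq y\;\leftrightarrow\; e>0\big)$, for any differential-free term $e$, provided that the ODE locally evolves $x$, i.e. in every state the value of the vector $f$ is not the zero vector; (Dadj) $\langle x'=f(x)\,\&\,Q(x)\rangle\, x=y\;\leftrightarrow\;\langle y'=-f(y)\,\&\,Q(y)\rangle\, y=x$, for a semianalytic formula $Q(x)$, where $f(y)$, $Q(y)$ denote the results of replacing $x$ by $y$.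
   Context: Variables are real-valued; each variable $x$ has a differential variable $x'$. A state is a map from variables to $\mathbb{R}$. Terms are built from variables, rational constants, $+$, $\cdot$ and finitely many fixed function symbols interpreted as $C^\infty$ functions $\mathbb{R}^k\to\mathbb{R}$, evaluated as usual; differential-free terms contain no differential variables. Semianalytic formulas are built from comparisons $e\sim\tilde e$ ($\sim\in\{=,\ge,>\}$) of differential-free terms by $\wedge,\vee,\neg$. Formulas additionally allow quantifiers and modalities $[\alpha]\phi$, $\langle\alpha\rangle\phi$ for ODEs $\alpha \equiv x'=f(x)\,\&\,Q$ ($Q$ semianalytic; omitted if $Q$ is true). For vectors, $x=y$ abbreviates $\bigwedge_i x_i=y_i$ and $x\neq y$ is its negation. Semantics of ODEs: $(\omega,\nu)\in[\![x'=f(x)\&Q]\!]$ iff there are $T\ge0$ and $\varphi:[0,T]\to$ states with $\varphi(0)=\omega$ on all variables except $x'$, $\varphi(T)=\nu$, and for all $\zeta\in[0,T]$: $\varphi(\zeta)$ satisfies $x'=f(x)\wedge Q$, $\varphi(\zeta)$ agrees with $\varphi(0)$ on all variables other than $x,x'$, and, if $T>0$, $t\mapsto\varphi(t)(x)$ is differentiable at $\zeta$ with derivative $\varphi(\zeta)(x')$. Then $\omega\models[\alpha]\phi$ iff $\nu\models\phi$ for all $\nu$ with $(\omega,\nu)\in[\![\alpha]\!]$, and $\omega\models\langle\alpha\rangle\phi$ iff $\nu\models\phi$ for some such $\nu$. A formula is valid if true in all states. *)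

theory Defs
  imports Complex_Main
begin

text \<open>Each (base) variable v has a differential variable v'.\<close>
datatype 'v var = Base 'v | Diff 'v

type_synonym 'v state = "'v var \<Rightarrow> real"

text \<open>A function on R^k is represented as a function on real lists; only lists of
  length k matter. Continuity in the sup-norm sense, partial derivatives in direction i.\<close>

definition cont_len :: "nat \<Rightarrow> (real list \<Rightarrow> real) \<Rightarrow> bool" where
  "cont_len k g \<longleftrightarrow> (\<forall>xs. length xs = k \<longrightarrow> (\<forall>\<epsilon>>0. \<exists>\<delta>>0. \<forall>ys. length ys = k \<longrightarrow>
      (\<forall>i<k. \<bar>ys ! i - xs ! i\<bar> < \<delta>) \<longrightarrow> \<bar>g ys - g xs\<bar> < \<epsilon>))"

text \<open>C-infinity: all iterated partial derivatives exist everywhere and are continuous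
  (greatest fixed point).\<close>
coinductive smooth_len :: "nat \<Rightarrow> (real list \<Rightarrow> real) \<Rightarrow> bool" for k where
  "cont_len k g \<Longrightarrow>
   (\<forall>i<k. \<exists>h. (\<forall>xs. length xs = k \<longrightarrow>
        ((\<lambda>t. g (xs[i := xs ! i + t])) has_real_derivative h xs) (at 0)) \<and> smooth_len k h)
   \<Longrightarrow> smooth_len k g"

datatype ('v, 'f) trm =
    Var "'v var"
  | Const rat
  | Plus "('v, 'f) trm" "('v, 'f) trm"
  | Times "('v, 'f) trm" "('v, 'f) trm"
  | Fn 'f "('v, 'f) trm list"

text \<open>An ODE x' = f(x) \& Q is written as the list of pairs (x_i, f_i) and the formula Q.\<close>
datatype ('v, 'f) fml =
    Eq "('v, 'f) trm" "('v, 'f) trm"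
  | Geq "('v, 'f) trm" "('v, 'f) trm"
  | Gt "('v, 'f) trm" "('v, 'f) trm"
  | And "('v, 'f) fml" "('v, 'f) fml"
  | Or "('v, 'f) fml" "('v, 'f) fml"
  | Not "('v, 'f) fml"
  | Forall "'v var" "('v, 'f) fml"
  | Exists "'v var" "('v, 'f) fml"
  | Box "('v \<times> ('v, 'f) trm) list" "('v, 'f) fml" "('v, 'f) fml"
  | Dia "('v \<times> ('v, 'f) trm) list" "('v, 'f) fml" "('v, 'f) fml"

definition Imp :: "('v, 'f) fml \<Rightarrow> ('v, 'f) fml \<Rightarrow> ('v, 'f) fml" where
  "Imp p q = Or (Not p) q"

definition Iff :: "('v, 'f) fml \<Rightarrow> ('v, 'f) fml \<Rightarrow> ('v, 'f) fml" where
  "Iff p q = And (Imp p q) (Imp q p)"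

definition VecEq :: "'v list \<Rightarrow> 'v list \<Rightarrow> ('v, 'f) fml" where
  "VecEq xs ys = foldr (\<lambda>(a, b) p. And (Eq (Var (Base a)) (Var (Base b))) p) (zip xs ys)
                    (Eq (Const 0) (Const 0))"

definition Neg :: "('v, 'f) trm \<Rightarrow> ('v, 'f) trm" where
  "Neg t = Times (Const (-1)) t"

fun dfree :: "('v, 'f) trm \<Rightarrow> bool" where
  "dfree (Var (Base _)) = True"
| "dfree (Var (Diff _)) = False"
| "dfree (Const _) = True"
| "dfree (Plus a b) = (dfree a \<and> dfree b)"
| "dfree (Times a b) = (dfree a \<and> dfree b)"
| "dfree (Fn _ ts) = (\<forall>t\<in>set ts. dfree t)"

fun wf_trm :: "('f \<Rightarrow> nat) \<Rightarrow> ('v, 'f) trm \<Rightarrow> bool" where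
  "wf_trm ar (Var _) = True"
| "wf_trm ar (Const _) = True"
| "wf_trm ar (Plus a b) = (wf_trm ar a \<and> wf_trm ar b)"
| "wf_trm ar (Times a b) = (wf_trm ar a \<and> wf_trm ar b)"
| "wf_trm ar (Fn f ts) = (length ts = ar f \<and> (\<forall>t\<in>set ts. wf_trm ar t))"

fun vars_trm :: "('v, 'f) trm \<Rightarrow> 'v set" where
  "vars_trm (Var (Base v)) = {v}"
| "vars_trm (Var (Diff v)) = {v}"
| "vars_trm (Const _) = {}"
| "vars_trm (Plus a b) = vars_trm a \<union> vars_trm b"
| "vars_trm (Times a b) = vars_trm a \<union> vars_trm b"
| "vars_trm (Fn _ ts) = (\<Union>t\<in>set ts. vars_trm t)"

fun var_name :: "'v var \<Rightarrow> 'v" where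
  "var_name (Base v) = v"
| "var_name (Diff v) = v"

fun vars_fml :: "('v, 'f) fml \<Rightarrow> 'v set" where
  "vars_fml (Eq a b) = vars_trm a \<union> vars_trm b"
| "vars_fml (Geq a b) = vars_trm a \<union> vars_trm b"
| "vars_fml (Gt a b) = vars_trm a \<union> vars_trm b"
| "vars_fml (And p q) = vars_fml p \<union> vars_fml q"
| "vars_fml (Or p q) = vars_fml p \<union> vars_fml q"
| "vars_fml (Not p) = vars_fml p"
| "vars_fml (Forall v p) = insert (var_name v) (vars_fml p)"
| "vars_fml (Exists v p) = insert (var_name v) (vars_fml p)"
| "vars_fml (Box ode q p) = set (map fst ode) \<union> (\<Union>e\<in>set ode. vars_trm (snd e)) \<union> vars_fml q \<union> vars_fml p"
| "vars_fml (Dia ode q p) = set (map fst ode) \<union> (\<Union>e\<in>set ode. vars_trm (snd e)) \<union> vars_fml q \<union> vars_fml p"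

fun semianalytic :: "('v, 'f) fml \<Rightarrow> bool" where
  "semianalytic (Eq a b) = (dfree a \<and> dfree b)"
| "semianalytic (Geq a b) = (dfree a \<and> dfree b)"
| "semianalytic (Gt a b) = (dfree a \<and> dfree b)"
| "semianalytic (And p q) = (semianalytic p \<and> semianalytic q)"
| "semianalytic (Or p q) = (semianalytic p \<and> semianalytic q)"
| "semianalytic (Not p) = semianalytic p"
| "semianalytic (Forall _ _) = False"
| "semianalytic (Exists _ _) = False"
| "semianalytic (Box _ _ _) = False"
| "semianalytic (Dia _ _ _) = False"

definition wf_ode :: "('f \<Rightarrow> nat) \<Rightarrow> ('v \<times> ('v, 'f) trm) list \<Rightarrow> bool" where
  "wf_ode ar ode \<longleftrightarrow> distinct (map fst ode) \<and> (\<forall>e\<in>set ode. dfree (snd e) \<and> wf_trm ar (snd e))"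

fun wf_fml :: "('f \<Rightarrow> nat) \<Rightarrow> ('v, 'f) fml \<Rightarrow> bool" where
  "wf_fml ar (Eq a b) = (wf_trm ar a \<and> wf_trm ar b)"
| "wf_fml ar (Geq a b) = (wf_trm ar a \<and> wf_trm ar b)"
| "wf_fml ar (Gt a b) = (wf_trm ar a \<and> wf_trm ar b)"
| "wf_fml ar (And p q) = (wf_fml ar p \<and> wf_fml ar q)"
| "wf_fml ar (Or p q) = (wf_fml ar p \<and> wf_fml ar q)"
| "wf_fml ar (Not p) = wf_fml ar p"
| "wf_fml ar (Forall _ p) = wf_fml ar p"
| "wf_fml ar (Exists _ p) = wf_fml ar p"
| "wf_fml ar (Box ode q p) = (wf_ode ar ode \<and> semianalytic q \<and> wf_fml ar q \<and> wf_fml ar p)"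
| "wf_fml ar (Dia ode q p) = (wf_ode ar ode \<and> semianalytic q \<and> wf_fml ar q \<and> wf_fml ar p)"

definition ren :: "'v list \<Rightarrow> 'v list \<Rightarrow> 'v \<Rightarrow> 'v" where
  "ren xs ys v = (case map_of (zip xs ys) v of Some w \<Rightarrow> w | None \<Rightarrow> v)"

fun rename_var :: "('v \<Rightarrow> 'v) \<Rightarrow> 'v var \<Rightarrow> 'v var" where
  "rename_var \<sigma> (Base v) = Base (\<sigma> v)"
| "rename_var \<sigma> (Diff v) = Diff (\<sigma> v)"

fun rename_trm :: "('v \<Rightarrow> 'v) \<Rightarrow> ('v, 'f) trm \<Rightarrow> ('v, 'f) trm" where
  "rename_trm \<sigma> (Var v) = Var (rename_var \<sigma> v)"
| "rename_trm \<sigma> (Const c) = Const c"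
| "rename_trm \<sigma> (Plus a b) = Plus (rename_trm \<sigma> a) (rename_trm \<sigma> b)"
| "rename_trm \<sigma> (Times a b) = Times (rename_trm \<sigma> a) (rename_trm \<sigma> b)"
| "rename_trm \<sigma> (Fn f ts) = Fn f (map (rename_trm \<sigma>) ts)"

fun rename_fml :: "('v \<Rightarrow> 'v) \<Rightarrow> ('v, 'f) fml \<Rightarrow> ('v, 'f) fml" where
  "rename_fml \<sigma> (Eq a b) = Eq (rename_trm \<sigma> a) (rename_trm \<sigma> b)"
| "rename_fml \<sigma> (Geq a b) = Geq (rename_trm \<sigma> a) (rename_trm \<sigma> b)"
| "rename_fml \<sigma> (Gt a b) = Gt (rename_trm \<sigma> a) (rename_trm \<sigma> b)"
| "rename_fml \<sigma> (And p q) = And (rename_fml \<sigma> p) (rename_fml \<sigma> q)"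
| "rename_fml \<sigma> (Or p q) = Or (rename_fml \<sigma> p) (rename_fml \<sigma> q)"
| "rename_fml \<sigma> (Not p) = Not (rename_fml \<sigma> p)"
| "rename_fml \<sigma> (Forall v p) = Forall (rename_var \<sigma> v) (rename_fml \<sigma> p)"
| "rename_fml \<sigma> (Exists v p) = Exists (rename_var \<sigma> v) (rename_fml \<sigma> p)"
| "rename_fml \<sigma> (Box ode q p) = Box (map (\<lambda>(x, t). (\<sigma> x, rename_trm \<sigma> t)) ode) (rename_fml \<sigma> q) (rename_fml \<sigma> p)"
| "rename_fml \<sigma> (Dia ode q p) = Dia (map (\<lambda>(x, t). (\<sigma> x, rename_trm \<sigma> t)) ode) (rename_fml \<sigma> q) (rename_fml \<sigma> p)"

fun eval :: "('f \<Rightarrow> real list \<Rightarrow> real) \<Rightarrow> 'v state \<Rightarrow> ('v, 'f) trm \<Rightarrow> real" where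
  "eval I \<omega> (Var v) = \<omega> v"
| "eval I \<omega> (Const c) = of_rat c"
| "eval I \<omega> (Plus a b) = eval I \<omega> a + eval I \<omega> b"
| "eval I \<omega> (Times a b) = eval I \<omega> a * eval I \<omega> b"
| "eval I \<omega> (Fn f ts) = I f (map (eval I \<omega>) ts)"

definition ode_rel :: "('f \<Rightarrow> real list \<Rightarrow> real) \<Rightarrow> ('v \<times> ('v, 'f) trm) list \<Rightarrow>
    ('v state \<Rightarrow> bool) \<Rightarrow> 'v state \<Rightarrow> 'v state \<Rightarrow> bool" where
  "ode_rel I ode Q \<omega> \<nu> \<longleftrightarrow> (\<exists>T::real. T \<ge> 0 \<and> (\<exists>\<phi> :: real \<Rightarrow> 'v state.
      (\<forall>v. v \<notin> Diff ` set (map fst ode) \<longrightarrow> \<phi> 0 v = \<omega> v) \<and>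
      \<phi> T = \<nu> \<and>
      (\<forall>\<zeta>\<in>{0..T}.
         (\<forall>(x, f)\<in>set ode. \<phi> \<zeta> (Diff x) = eval I (\<phi> \<zeta>) f) \<and>
         Q (\<phi> \<zeta>) \<and>
         (\<forall>v. v \<notin> Base ` set (map fst ode) \<longrightarrow> v \<notin> Diff ` set (map fst ode) \<longrightarrow> \<phi> \<zeta> v = \<phi> 0 v) \<and>
         (T > 0 \<longrightarrow> (\<forall>x\<in>set (map fst ode).
            ((\<lambda>t. \<phi> t (Base x)) has_real_derivative \<phi> \<zeta> (Diff x)) (at \<zeta> within {0..T}))))))"

fun sem :: "('f \<Rightarrow> real list \<Rightarrow> real) \<Rightarrow> ('v, 'f) fml \<Rightarrow> 'v state \<Rightarrow> bool" where
  "sem I (Eq a b) \<omega> = (eval I \<omega> a = eval I \<omega> b)"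
| "sem I (Geq a b) \<omega> = (eval I \<omega> a \<ge> eval I \<omega> b)"
| "sem I (Gt a b) \<omega> = (eval I \<omega> a > eval I \<omega> b)"
| "sem I (And p q) \<omega> = (sem I p \<omega> \<and> sem I q \<omega>)"
| "sem I (Or p q) \<omega> = (sem I p \<omega> \<or> sem I q \<omega>)"
| "sem I (Not p) \<omega> = (\<not> sem I p \<omega>)"
| "sem I (Forall v p) \<omega> = (\<forall>r. sem I p (\<omega>(v := r)))"
| "sem I (Exists v p) \<omega> = (\<exists>r. sem I p (\<omega>(v := r)))"
| "sem I (Box ode q p) \<omega> = (\<forall>\<nu>. ode_rel I ode (sem I q) \<omega> \<nu> \<longrightarrow> sem I p \<nu>)"
| "sem I (Dia ode q p) \<omega> = (\<exists>\<nu>. ode_rel I ode (sem I q) \<omega> \<nu> \<and> sem I p \<nu>)"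

definition valid :: "('f \<Rightarrow> real list \<Rightarrow> real) \<Rightarrow> ('v, 'f) fml \<Rightarrow> bool" where
  "valid I p \<longleftrightarrow> (\<forall>\<omega>. sem I p \<omega>)"

end

theory Submission
  imports Defs "HOL-Analysis.Analysis"
begin

(*
  Smoothness of the interpreted function symbols makes every differential-free term locally
  Lipschitz in the l1 distance of the variables it mentions (mean value theorem, one coordinate at
  a time).  An ODE x' = f(x) is therefore, on the values of x, an ODE with a locally Lipschitz
  right-hand side.  Its solutions are unique: on a short interval the largest distance between two
  solutions is at most half of itself, and real induction extends agreement to the whole interval.
  They exist for a short time by Picard iteration.
  (Uniq) follows because two trajectories from the same state agree on the shorter time interval.
  (Cont) holds because a trajectory starting with nonzero velocity leaves its initial point at once,
  while e > 0 persists for a while by continuity.  (Dadj) runs a trajectory backwards in time,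
  t \<mapsto> T - t, on the copy y of x.
*)

lemma finite_vars_trm: "finite (vars_trm t)"
  by (induction t rule: vars_trm.induct) auto

lemma eval_cong_Base:
  "dfree t \<Longrightarrow> (\<And>v. v \<in> vars_trm t \<Longrightarrow> s1 (Base v) = s2 (Base v)) \<Longrightarrow> eval I s1 t = eval I s2 t"
proof (induction t)
  case (Var x)
  then show ?case by (cases x) auto
next
  case (Fn f ts)
  then have "map (eval I s1) ts = map (eval I s2) ts" by auto
  then show ?case by (simp only: eval.simps)
qed auto

lemma sem_cong_Base:
  "semianalytic q \<Longrightarrow> (\<And>v. v \<in> vars_fml q \<Longrightarrow> s1 (Base v) = s2 (Base v)) \<Longrightarrow> sem I q s1 = sem I q s2"
proof (induction q)
  case (Eq a b)
  then show ?case using eval_cong_Base[of a s1 s2 I] eval_cong_Base[of b s1 s2 I] by auto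
next
  case (Geq a b)
  then show ?case using eval_cong_Base[of a s1 s2 I] eval_cong_Base[of b s1 s2 I] by auto
next
  case (Gt a b)
  then show ?case using eval_cong_Base[of a s1 s2 I] eval_cong_Base[of b s1 s2 I] by auto
qed auto

lemma eval_rename_trm: "eval I s (rename_trm \<sigma> t) = eval I (s \<circ> rename_var \<sigma>) t"
proof (induction t)
  case (Fn f ts)
  then have "map (eval I s \<circ> rename_trm \<sigma>) ts = map (eval I (s \<circ> rename_var \<sigma>)) ts"
    by (simp add: comp_def)
  then show ?case by (simp only: rename_trm.simps eval.simps map_map)
qed auto

lemma sem_rename_fml: "semianalytic q \<Longrightarrow> sem I (rename_fml \<sigma> q) s = sem I q (s \<circ> rename_var \<sigma>)"
  by (induction q) (auto simp: eval_rename_trm)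

lemma sem_Imp [simp]: "sem I (Imp p q) s \<longleftrightarrow> (sem I p s \<longrightarrow> sem I q s)"
  by (simp add: Imp_def)

lemma sem_Iff [simp]: "sem I (Iff p q) s \<longleftrightarrow> (sem I p s \<longleftrightarrow> sem I q s)"
  by (auto simp: Iff_def)

lemma sem_VecEq:
  "length xs = length ys \<Longrightarrow>
    sem I (VecEq xs ys) s \<longleftrightarrow> (\<forall>i<length xs. s (Base (xs ! i)) = s (Base (ys ! i)))"
proof (induction xs arbitrary: ys)
  case Nil
  then show ?case by (simp add: VecEq_def)
next
  case (Cons x xs)
  then obtain y ys' where "ys = y # ys'" by (cases ys) auto
  with Cons show ?case by (auto simp: VecEq_def nth_Cons split: nat.splits)
qed

section \<open>Local Lipschitz continuity of terms\<close>

definition l1_dist :: "'a set \<Rightarrow> ('a \<Rightarrow> real) \<Rightarrow> ('a \<Rightarrow> real) \<Rightarrow> real" where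
  "l1_dist V u v = (\<Sum>a\<in>V. \<bar>u a - v a\<bar>)"

lemma l1_dist_nonneg: "0 \<le> l1_dist V u v"
  by (simp add: l1_dist_def sum_nonneg)

lemma l1_dist_self [simp]: "l1_dist V u u = 0"
  by (simp add: l1_dist_def)

lemma abs_le_l1_dist: "finite V \<Longrightarrow> a \<in> V \<Longrightarrow> \<bar>u a - v a\<bar> \<le> l1_dist V u v"
  unfolding l1_dist_def by (rule member_le_sum) auto

lemma l1_dist_le_card:
  "(\<And>a. a \<in> V \<Longrightarrow> \<bar>u a - v a\<bar> \<le> (c::real)) \<Longrightarrow> l1_dist V u v \<le> real (card V) * c"
  unfolding l1_dist_def by (rule sum_bounded_above)

lemma l1_dist_eq_0_iff: "finite V \<Longrightarrow> l1_dist V u v = 0 \<longleftrightarrow> (\<forall>a\<in>V. u a = v a)"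
  by (simp add: l1_dist_def sum_nonneg_eq_0_iff)

lemma continuous_on_l1_dist:
  "finite V \<Longrightarrow> (\<And>a. a \<in> V \<Longrightarrow> continuous_on S (\<lambda>t. p t a)) \<Longrightarrow>
    (\<And>a. a \<in> V \<Longrightarrow> continuous_on S (\<lambda>t. q t a)) \<Longrightarrow> continuous_on S (\<lambda>t. l1_dist V (p t) (q t))"
  unfolding l1_dist_def by (intro continuous_intros) auto

definition locally_lipschitz :: "'a set \<Rightarrow> (('a \<Rightarrow> real) \<Rightarrow> real) \<Rightarrow> bool" where
  "locally_lipschitz V h \<longleftrightarrow> (\<forall>u. \<exists>\<delta>>0. \<exists>L\<ge>0. \<forall>v w. l1_dist V v u < \<delta> \<longrightarrow> l1_dist V w u < \<delta> \<longrightarrow>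
      \<bar>h v - h w\<bar> \<le> L * l1_dist V v w)"

lemma locally_lipschitzE:
  assumes "locally_lipschitz V h"
  obtains \<delta> L where "\<delta> > 0" "L \<ge> 0"
    "\<And>v w. l1_dist V v u < \<delta> \<Longrightarrow> l1_dist V w u < \<delta> \<Longrightarrow> \<bar>h v - h w\<bar> \<le> L * l1_dist V v w"
  using assms unfolding locally_lipschitz_def by metis

lemma locally_lipschitz_familyE:
  assumes "finite A" "\<And>i. i \<in> A \<Longrightarrow> locally_lipschitz V (h i)"
  obtains \<delta> L where "\<delta> > 0" "L \<ge> 0"
    "\<And>i v w. i \<in> A \<Longrightarrow> l1_dist V v u < \<delta> \<Longrightarrow> l1_dist V w u < \<delta> \<Longrightarrow>
      \<bar>h i v - h i w\<bar> \<le> L * l1_dist V v w"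
proof -
  have "\<exists>\<delta>>0. \<exists>L\<ge>0. \<forall>i\<in>A. \<forall>v w. l1_dist V v u < \<delta> \<longrightarrow> l1_dist V w u < \<delta> \<longrightarrow>
      \<bar>h i v - h i w\<bar> \<le> L * l1_dist V v w"
    using assms
  proof (induction A rule: finite_induct)
    case empty
    show ?case by (auto intro: exI[of _ 1])
  next
    case (insert j A)
    obtain \<delta>1 L1 where 1: "\<delta>1 > 0" "L1 \<ge> 0" "\<forall>i\<in>A. \<forall>v w. l1_dist V v u < \<delta>1 \<longrightarrow>
        l1_dist V w u < \<delta>1 \<longrightarrow> \<bar>h i v - h i w\<bar> \<le> L1 * l1_dist V v w"
      using insert.IH insert.prems by blast
    have "locally_lipschitz V (h j)" using insert.prems by simp
    then obtain \<delta>2 L2 where 2: "\<delta>2 > 0" "L2 \<ge> 0" "\<And>v w. l1_dist V v u < \<delta>2 \<Longrightarrow>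
        l1_dist V w u < \<delta>2 \<Longrightarrow> \<bar>h j v - h j w\<bar> \<le> L2 * l1_dist V v w"
      using locally_lipschitzE[of V "h j" u] by blast
    have "\<bar>h i v - h i w\<bar> \<le> max L1 L2 * l1_dist V v w"
      if "i \<in> insert j A" "l1_dist V v u < min \<delta>1 \<delta>2" "l1_dist V w u < min \<delta>1 \<delta>2" for i v w
    proof -
      have "\<bar>h i v - h i w\<bar> \<le> (if i = j then L2 else L1) * l1_dist V v w"
        using that 1 2 by auto
      also have "\<dots> \<le> max L1 L2 * l1_dist V v w"
        by (intro mult_right_mono l1_dist_nonneg) auto
      finally show ?thesis .
    qed
    then show ?case
      using 1 2 by (intro exI[of _ "min \<delta>1 \<delta>2"]) (auto intro!: exI[of _ "max L1 L2"])
  qed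
  then show ?thesis using that by blast
qed

lemma locally_lipschitz_const: "locally_lipschitz V (\<lambda>_. c)"
  unfolding locally_lipschitz_def by (auto intro!: exI[of _ "1::real"] l1_dist_nonneg)

lemma locally_lipschitz_component: "finite V \<Longrightarrow> a \<in> V \<Longrightarrow> locally_lipschitz V (\<lambda>u. u a)"
  unfolding locally_lipschitz_def by (auto intro!: exI[of _ 1] abs_le_l1_dist)

lemma locally_lipschitz_add:
  assumes "locally_lipschitz V f" "locally_lipschitz V g"
  shows "locally_lipschitz V (\<lambda>u. f u + g u)"
  unfolding locally_lipschitz_def
proof
  fix u
  obtain \<delta> L where \<delta>: "\<delta> > 0" "L \<ge> 0" and lip: "\<And>h v w. h \<in> {f, g} \<Longrightarrow> l1_dist V v u < \<delta> \<Longrightarrow>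
      l1_dist V w u < \<delta> \<Longrightarrow> \<bar>h v - h w\<bar> \<le> L * l1_dist V v w"
    using locally_lipschitz_familyE[of "{f, g}" V "\<lambda>h. h"] assms by blast
  have "\<bar>f v + g v - (f w + g w)\<bar> \<le> (2 * L) * l1_dist V v w"
    if "l1_dist V v u < \<delta>" "l1_dist V w u < \<delta>" for v w
    using lip[of f v w] lip[of g v w] that by auto
  then show "\<exists>\<delta>>0. \<exists>L\<ge>0. \<forall>v w. l1_dist V v u < \<delta> \<longrightarrow> l1_dist V w u < \<delta> \<longrightarrow>
      \<bar>f v + g v - (f w + g w)\<bar> \<le> L * l1_dist V v w"
    using \<delta> by (intro exI[of _ \<delta>]) (auto intro!: exI[of _ "2 * L"])
qed

lemma locally_lipschitz_mult:
  assumes "locally_lipschitz V f" "locally_lipschitz V g"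
  shows "locally_lipschitz V (\<lambda>u. f u * g u)"
  unfolding locally_lipschitz_def
proof
  fix u
  obtain \<delta> L where \<delta>: "\<delta> > 0" "L \<ge> 0" and lip: "\<And>h v w. h \<in> {f, g} \<Longrightarrow> l1_dist V v u < \<delta> \<Longrightarrow>
      l1_dist V w u < \<delta> \<Longrightarrow> \<bar>h v - h w\<bar> \<le> L * l1_dist V v w"
    using locally_lipschitz_familyE[of "{f, g}" V "\<lambda>h. h"] assms by blast
  define B where "B = \<bar>f u\<bar> + \<bar>g u\<bar> + L * \<delta>"
  have bounded: "\<bar>h v\<bar> \<le> B" if "h \<in> {f, g}" "l1_dist V v u < \<delta>" for h v
  proof -
    have "\<bar>h v - h u\<bar> \<le> L * \<delta>"
      using lip[OF that(1,2), of u] that(2) \<delta> mult_left_mono[of "l1_dist V v u" \<delta> L]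
      by (simp add: l1_dist_def)
    then show ?thesis using that(1) by (auto simp: B_def)
  qed
  have "\<bar>f v * g v - f w * g w\<bar> \<le> (2 * B * L) * l1_dist V v w"
    if v: "l1_dist V v u < \<delta>" and w: "l1_dist V w u < \<delta>" for v w
  proof -
    have "\<bar>f v\<bar> * \<bar>g v - g w\<bar> \<le> B * (L * l1_dist V v w)"
      using bounded[OF _ v, of f] lip[OF _ v w, of g] by (intro mult_mono) auto
    moreover have "\<bar>g w\<bar> * \<bar>f v - f w\<bar> \<le> B * (L * l1_dist V v w)"
      using bounded[OF _ w, of g] lip[OF _ v w, of f] by (intro mult_mono) auto
    moreover have "f v * g v - f w * g w = f v * (g v - g w) + g w * (f v - f w)"
      by (simp add: algebra_simps)
    ultimately show ?thesis
      using abs_triangle_ineq[of "f v * (g v - g w)" "g w * (f v - f w)"] by (simp add: abs_mult)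
  qed
  moreover have "0 \<le> B" using \<delta> by (simp add: B_def)
  ultimately show "\<exists>\<delta>>0. \<exists>L\<ge>0. \<forall>v w. l1_dist V v u < \<delta> \<longrightarrow> l1_dist V w u < \<delta> \<longrightarrow>
      \<bar>f v * g v - f w * g w\<bar> \<le> L * l1_dist V v w"
    using \<delta> by (intro exI[of _ \<delta>]) (auto intro!: exI[of _ "2 * B * L"])
qed

lemma locally_lipschitz_compose:
  assumes "finite K" "locally_lipschitz K G" "\<And>i. i \<in> K \<Longrightarrow> locally_lipschitz V (h i)"
  shows "locally_lipschitz V (\<lambda>s. G (\<lambda>i. h i s))"
  unfolding locally_lipschitz_def
proof
  fix s
  let ?p = "\<lambda>s i. h i s"
  obtain \<delta>G LG where \<delta>G: "\<delta>G > 0" "LG \<ge> 0" and lipG: "\<And>v w. l1_dist K v (?p s) < \<delta>G \<Longrightarrow>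
      l1_dist K w (?p s) < \<delta>G \<Longrightarrow> \<bar>G v - G w\<bar> \<le> LG * l1_dist K v w"
    using locally_lipschitzE[OF assms(2), of "?p s"] by blast
  obtain \<delta>h Lh where \<delta>h: "\<delta>h > 0" "Lh \<ge> 0" and liph: "\<And>i v w. i \<in> K \<Longrightarrow> l1_dist V v s < \<delta>h \<Longrightarrow>
      l1_dist V w s < \<delta>h \<Longrightarrow> \<bar>h i v - h i w\<bar> \<le> Lh * l1_dist V v w"
    using locally_lipschitz_familyE[of K V h s, OF assms(1,3)] by blast
  define C where "C = card K * Lh"
  define \<delta> where "\<delta> = min \<delta>h (\<delta>G / (C + 1))"
  have C: "C \<ge> 0" using \<delta>h by (simp add: C_def)
  have p: "l1_dist K (?p v) (?p w) \<le> C * l1_dist V v w"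
    if "l1_dist V v s < \<delta>" "l1_dist V w s < \<delta>" for v w
    using l1_dist_le_card[of K "?p v" "?p w" "Lh * l1_dist V v w"] liph that
    by (simp add: C_def \<delta>_def mult.assoc)
  have near: "l1_dist K (?p v) (?p s) < \<delta>G" if "l1_dist V v s < \<delta>" for v
  proof -
    have "l1_dist K (?p v) (?p s) \<le> (C + 1) * l1_dist V v s"
      using p[OF that, of s] \<delta>h \<delta>G C l1_dist_nonneg[of V v s] by (simp add: \<delta>_def algebra_simps)
    also have "\<dots> < (C + 1) * (\<delta>G / (C + 1))"
      using that C by (intro mult_strict_left_mono) (auto simp: \<delta>_def)
    finally show ?thesis using C by simp
  qed
  have "\<bar>G (?p v) - G (?p w)\<bar> \<le> (LG * C) * l1_dist V v w"
    if "l1_dist V v s < \<delta>" "l1_dist V w s < \<delta>" for v w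
  proof -
    have "\<bar>G (?p v) - G (?p w)\<bar> \<le> LG * l1_dist K (?p v) (?p w)"
      using lipG[OF near near] that .
    also have "\<dots> \<le> LG * (C * l1_dist V v w)"
      using p[OF that] \<delta>G by (intro mult_left_mono) auto
    finally show ?thesis by (simp add: mult.assoc)
  qed
  then show "\<exists>\<delta>>0. \<exists>L\<ge>0. \<forall>v w. l1_dist V v s < \<delta> \<longrightarrow> l1_dist V w s < \<delta> \<longrightarrow>
      \<bar>G (?p v) - G (?p w)\<bar> \<le> L * l1_dist V v w"
    using \<delta>h \<delta>G C by (intro exI[of _ \<delta>]) (auto simp: \<delta>_def intro!: exI[of _ "LG * C"])
qed

lemma locally_lipschitz_continuous_on:
  assumes "finite V" "locally_lipschitz V h" "\<And>a. a \<in> V \<Longrightarrow> continuous_on S (\<lambda>t. p t a)"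
  shows "continuous_on S (\<lambda>t. h (p t))"
  unfolding continuous_on_def
proof
  fix t0 assume "t0 \<in> S"
  obtain \<delta> L where \<delta>: "\<delta> > 0" "L \<ge> 0" and lip: "\<And>v w. l1_dist V v (p t0) < \<delta> \<Longrightarrow>
      l1_dist V w (p t0) < \<delta> \<Longrightarrow> \<bar>h v - h w\<bar> \<le> L * l1_dist V v w"
    using locally_lipschitzE[OF assms(2), of "p t0"] by blast
  define D where "D t = l1_dist V (p t) (p t0)" for t
  have "continuous_on S D"
    unfolding D_def using assms(1,3) by (intro continuous_on_l1_dist continuous_on_const)
  then have "(D \<longlongrightarrow> D t0) (at t0 within S)"
    using \<open>t0 \<in> S\<close> by (simp add: continuous_on_def)
  then have D: "(D \<longlongrightarrow> 0) (at t0 within S)"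
    by (simp add: D_def)
  have "\<forall>\<^sub>F t in at t0 within S. D t < \<delta>"
    using order_tendstoD(2)[OF D \<delta>(1)] .
  then have "\<forall>\<^sub>F t in at t0 within S. norm (h (p t) - h (p t0)) \<le> L * D t"
  proof eventually_elim
    case (elim t)
    then show ?case using lip[of "p t" "p t0"] \<delta>(1) by (simp add: D_def)
  qed
  moreover have "((\<lambda>t. L * D t) \<longlongrightarrow> 0) (at t0 within S)"
    using tendsto_mult_right_zero[OF D] .
  ultimately show "((\<lambda>t. h (p t)) \<longlongrightarrow> h (p t0)) (at t0 within S)"
    by (rule LIM_zero_cancel[OF Lim_null_comparison])
qed

lemma DERIV_bound_Icc:
  fixes f :: "real \<Rightarrow> real"
  assumes "\<And>t. t \<in> {a..b} \<Longrightarrow> (f has_real_derivative f' t) (at t within {a..b})"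
    and "\<And>t. t \<in> {a..b} \<Longrightarrow> \<bar>f' t\<bar> \<le> B" and "s \<in> {a..b}" "t \<in> {a..b}"
  shows "\<bar>f t - f s\<bar> \<le> B * \<bar>t - s\<bar>"
  using field_differentiable_bound[of "{a..b}" f f' B t s] assms by simp

lemma smooth_len_partial_derivatives:
  assumes "smooth_len k g"
  obtains H where
    "\<And>j u r. j < k \<Longrightarrow>
      ((\<lambda>r. g (map (u(j := r)) [0..<k])) has_real_derivative H j (map (u(j := r)) [0..<k])) (at r)"
    "\<And>j. j < k \<Longrightarrow> cont_len k (H j)"
proof -
  have "\<forall>j\<in>{..<k}. \<exists>H. (\<forall>u r. ((\<lambda>r. g (map (u(j := r)) [0..<k])) has_real_derivative
      H (map (u(j := r)) [0..<k])) (at r)) \<and> cont_len k H"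
  proof
    fix j assume j: "j \<in> {..<k}"
    from assms j have "\<exists>H. (\<forall>xs. length xs = k \<longrightarrow>
        ((\<lambda>t. g (xs[j := xs ! j + t])) has_real_derivative H xs) (at 0)) \<and> smooth_len k H"
      by (cases rule: smooth_len.cases) auto
    then obtain H where H: "\<And>xs. length xs = k \<Longrightarrow>
        ((\<lambda>t. g (xs[j := xs ! j + t])) has_real_derivative H xs) (at 0)" and "smooth_len k H"
      by blast
    from \<open>smooth_len k H\<close> have "cont_len k H" by (cases rule: smooth_len.cases)
    moreover have "((\<lambda>r. g (map (u(j := r)) [0..<k])) has_real_derivative
        H (map (u(j := r)) [0..<k])) (at r)" for u r
    proof -
      have "(map (u(j := r)) [0..<k])[j := map (u(j := r)) [0..<k] ! j + t] =
          map (u(j := t + r)) [0..<k]" for t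
        using j by (intro nth_equalityI) (auto simp: nth_list_update)
      then show ?thesis
        using H[of "map (u(j := r)) [0..<k]"]
          DERIV_shift[of "\<lambda>r. g (map (u(j := r)) [0..<k])" "H (map (u(j := r)) [0..<k])" 0 r]
        by simp
    qed
    ultimately show "\<exists>H. (\<forall>u r. ((\<lambda>r. g (map (u(j := r)) [0..<k])) has_real_derivative
        H (map (u(j := r)) [0..<k])) (at r)) \<and> cont_len k H"
      by blast
  qed
  then show ?thesis
    using that bchoice[of "{..<k}"] by (metis lessThan_iff)
qed

lemma cont_len_bounded_near:
  assumes "\<And>j. j < k \<Longrightarrow> cont_len k (H j)" "length xs = k"
  obtains \<delta> L where "\<delta> > 0" "L \<ge> 0"
    "\<And>j ys. j < k \<Longrightarrow> length ys = k \<Longrightarrow> (\<forall>i<k. \<bar>ys ! i - xs ! i\<bar> < \<delta>) \<Longrightarrow> \<bar>H j ys\<bar> \<le> L"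
proof -
  have "\<forall>j\<in>{..<k}. \<exists>d>0. \<forall>ys. length ys = k \<longrightarrow> (\<forall>i<k. \<bar>ys ! i - xs ! i\<bar> < d) \<longrightarrow>
      \<bar>H j ys - H j xs\<bar> < 1"
  proof
    fix j assume "j \<in> {..<k}"
    then have "cont_len k (H j)" using assms(1) by simp
    then have "\<forall>\<epsilon>>0. \<exists>d>0. \<forall>ys. length ys = k \<longrightarrow> (\<forall>i<k. \<bar>ys ! i - xs ! i\<bar> < d) \<longrightarrow>
        \<bar>H j ys - H j xs\<bar> < \<epsilon>"
      using assms(2) unfolding cont_len_def by blast
    then show "\<exists>d>0. \<forall>ys. length ys = k \<longrightarrow> (\<forall>i<k. \<bar>ys ! i - xs ! i\<bar> < d) \<longrightarrow>
        \<bar>H j ys - H j xs\<bar> < 1"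
      using zero_less_one by blast
  qed
  then obtain D where D: "\<And>j. j < k \<Longrightarrow> D j > 0"
    and near: "\<And>j ys. j < k \<Longrightarrow> length ys = k \<Longrightarrow> (\<forall>i<k. \<bar>ys ! i - xs ! i\<bar> < D j) \<Longrightarrow>
      \<bar>H j ys - H j xs\<bar> < 1"
    using bchoice[of "{..<k}"] by (metis lessThan_iff)
  define \<delta> where "\<delta> = Min (insert 1 (D ` {..<k}))"
  define L where "L = (\<Sum>j<k. \<bar>H j xs\<bar>) + 1"
  have "\<delta> > 0" using D by (auto simp: \<delta>_def)
  moreover have "L \<ge> 0" by (simp add: L_def sum_nonneg)
  moreover have "\<bar>H j ys\<bar> \<le> L"
    if "j < k" "length ys = k" "\<forall>i<k. \<bar>ys ! i - xs ! i\<bar> < \<delta>" for j ys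
  proof -
    have "\<delta> \<le> D j" using that(1) by (auto simp: \<delta>_def)
    then have "\<bar>H j ys - H j xs\<bar> < 1" using near[OF that(1,2)] that(3) by force
    moreover have "\<bar>H j xs\<bar> \<le> (\<Sum>j<k. \<bar>H j xs\<bar>)" using that(1) by (intro member_le_sum) auto
    ultimately show ?thesis unfolding L_def by linarith
  qed
  ultimately show ?thesis using that by blast
qed

lemma smooth_len_locally_lipschitz:
  assumes "smooth_len k g"
  shows "locally_lipschitz {..<k} (\<lambda>u. g (map u [0..<k]))"
  unfolding locally_lipschitz_def
proof
  fix u0 :: "nat \<Rightarrow> real"
  let ?G = "\<lambda>u. g (map u [0..<k])"
  obtain H where H: "\<And>j u r. j < k \<Longrightarrow>
      ((\<lambda>r. ?G (u(j := r))) has_real_derivative H j (map (u(j := r)) [0..<k])) (at r)"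
    and cont: "\<And>j. j < k \<Longrightarrow> cont_len k (H j)"
    using smooth_len_partial_derivatives[OF assms] by blast
  obtain \<delta> L where \<delta>: "\<delta> > 0" and L: "L \<ge> 0" and bound: "\<And>j ys. j < k \<Longrightarrow> length ys = k \<Longrightarrow>
      (\<forall>i<k. \<bar>ys ! i - u0 i\<bar> < \<delta>) \<Longrightarrow> \<bar>H j ys\<bar> \<le> L"
    using cont_len_bounded_near[of k H "map u0 [0..<k]", OF cont] by auto
  have "\<bar>?G v - ?G w\<bar> \<le> L * l1_dist {..<k} v w"
    if v: "l1_dist {..<k} v u0 < \<delta>" and w: "l1_dist {..<k} w u0 < \<delta>" for v w
  proof -
    define p where "p j = (\<lambda>i. if i < j then w i else v i)" for j
    have close: "\<bar>u i - u0 i\<bar> < \<delta>" if "l1_dist {..<k} u u0 < \<delta>" "i < k" for u i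
      using abs_le_l1_dist[of "{..<k}" i u u0] that by simp
    have step: "\<bar>?G (p (Suc j)) - ?G (p j)\<bar> \<le> L * \<bar>w j - v j\<bar>" if j: "j < k" for j
    proof -
      have "\<bar>?G ((p j)(j := w j)) - ?G ((p j)(j := v j))\<bar> \<le> L * \<bar>w j - v j\<bar>"
      proof (rule DERIV_bound_Icc[where f = "\<lambda>r. ?G ((p j)(j := r))"
            and a = "min (v j) (w j)" and b = "max (v j) (w j)"])
        fix r assume r: "r \<in> {min (v j) (w j)..max (v j) (w j)}"
        show "((\<lambda>r. ?G ((p j)(j := r))) has_real_derivative H j (map ((p j)(j := r)) [0..<k]))
            (at r within {min (v j) (w j)..max (v j) (w j)})"
          by (rule has_field_derivative_at_within[OF H[OF j]])
        have "\<bar>((p j)(j := r)) i - u0 i\<bar> < \<delta>" if "i < k" for i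
          using close[OF v that] close[OF w that] r by (auto simp: p_def)
        then show "\<bar>H j (map ((p j)(j := r)) [0..<k])\<bar> \<le> L"
          using bound[OF j] by simp
      qed auto
      moreover have "(p j)(j := w j) = p (Suc j)" "(p j)(j := v j) = p j"
        by (auto simp: p_def)
      ultimately show ?thesis by simp
    qed
    have "?G w - ?G v = ?G (p k) - ?G (p 0)"
      by (auto simp: p_def intro!: arg_cong[where f = g] map_cong)
    also have "\<dots> = (\<Sum>j<k. ?G (p (Suc j)) - ?G (p j))"
      by (rule sum_lessThan_telescope[symmetric])
    finally have "\<bar>?G v - ?G w\<bar> = \<bar>\<Sum>j<k. ?G (p (Suc j)) - ?G (p j)\<bar>"
      by (simp add: abs_minus_commute)
    also have "\<dots> \<le> (\<Sum>j<k. \<bar>?G (p (Suc j)) - ?G (p j)\<bar>)"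
      by (rule sum_abs)
    also have "\<dots> \<le> (\<Sum>j<k. L * \<bar>v j - w j\<bar>)"
      using step by (intro sum_mono) (simp add: abs_minus_commute)
    finally show ?thesis by (simp add: l1_dist_def sum_distrib_left)
  qed
  then show "\<exists>\<delta>>0. \<exists>L\<ge>0. \<forall>v w. l1_dist {..<k} v u0 < \<delta> \<longrightarrow> l1_dist {..<k} w u0 < \<delta> \<longrightarrow>
      \<bar>?G v - ?G w\<bar> \<le> L * l1_dist {..<k} v w"
    using \<delta> L by blast
qed

lemma eval_locally_lipschitz:
  assumes smooth: "\<forall>f. smooth_len (ar f) (I f)" and "finite V"
  shows "dfree t \<Longrightarrow> wf_trm ar t \<Longrightarrow> vars_trm t \<subseteq> V \<Longrightarrow> locally_lipschitz (Base ` V) (\<lambda>s. eval I s t)"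
proof (induction t)
  case (Var x)
  then show ?case using \<open>finite V\<close> by (cases x) (auto intro: locally_lipschitz_component)
next
  case (Const c)
  then show ?case by (simp add: locally_lipschitz_const)
next
  case (Plus a b)
  then show ?case by (simp add: locally_lipschitz_add)
next
  case (Times a b)
  then show ?case by (simp add: locally_lipschitz_mult)
next
  case (Fn f ts)
  let ?k = "length ts"
  have "locally_lipschitz (Base ` V) (\<lambda>s. I f (map (\<lambda>i. eval I s (ts ! i)) [0..<?k]))"
  proof (rule locally_lipschitz_compose[where G = "\<lambda>u. I f (map u [0..<?k])"])
    show "locally_lipschitz {..<?k} (\<lambda>u. I f (map u [0..<?k]))"
      using smooth Fn.prems(2) by (auto intro: smooth_len_locally_lipschitz)
    show "locally_lipschitz (Base ` V) (\<lambda>s. eval I s (ts ! i))" if "i \<in> {..<?k}" for i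
    proof -
      have "ts ! i \<in> set ts" using that by simp
      then show ?thesis using Fn.prems by (intro Fn.IH) auto
    qed
  qed simp
  moreover have "map (\<lambda>i. eval I s (ts ! i)) [0..<?k] = map (eval I s) ts" for s
    by (rule nth_equalityI) simp_all
  ultimately show ?case by simp
qed

section \<open>Uniqueness of solutions\<close>

lemma Icc_subset_closed_forward:
  fixes a b :: real
  assumes "closed S" "a \<in> S"
    and step: "\<And>t. a \<le> t \<Longrightarrow> t < b \<Longrightarrow> {a..t} \<subseteq> S \<Longrightarrow> \<exists>c>t. {t..c} \<subseteq> S"
  shows "{a..b} \<subseteq> S"
proof (rule ccontr)
  define A where "A = {a..b} - S"
  assume "\<not> {a..b} \<subseteq> S"
  then obtain x0 where "x0 \<in> A" unfolding A_def by blast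
  have bdd: "bdd_below A"
    unfolding A_def by (rule bdd_belowI[of _ a]) auto
  define t0 where "t0 = Inf A"
  have lower: "t0 \<le> x" if "x \<in> A" for x
    unfolding t0_def using that bdd by (rule cInf_lower)
  have "a \<le> t0"
    unfolding t0_def using \<open>x0 \<in> A\<close> by (intro cInf_greatest) (auto simp: A_def)
  have "t0 \<le> b"
    using lower[OF \<open>x0 \<in> A\<close>] \<open>x0 \<in> A\<close> by (simp add: A_def)
  have below: "{a..<t0} \<subseteq> S"
  proof
    fix x assume x: "x \<in> {a..<t0}"
    show "x \<in> S"
    proof (rule ccontr)
      assume "x \<notin> S"
      with x \<open>t0 \<le> b\<close> have "x \<in> A" by (simp add: A_def)
      with lower x show False by fastforce
    qed
  qed
  have "t0 \<in> S"
  proof (cases "a = t0")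
    case False
    then have "t0 \<in> closure {a..<t0}" using \<open>a \<le> t0\<close> by simp
    then show ?thesis using below closure_mono closure_closed[OF assms(1)] by blast
  qed (use assms(2) in simp)
  with below have "{a..t0} \<subseteq> S" by (auto simp: less_eq_real_def)
  moreover have "t0 < b"
  proof (rule ccontr)
    assume "\<not> t0 < b"
    then have "x0 = t0"
      using \<open>t0 \<le> b\<close> lower[OF \<open>x0 \<in> A\<close>] \<open>x0 \<in> A\<close> by (simp add: A_def)
    then show False using \<open>t0 \<in> S\<close> \<open>x0 \<in> A\<close> by (simp add: A_def)
  qed
  ultimately obtain c where "c > t0" "{t0..c} \<subseteq> S"
    using step \<open>a \<le> t0\<close> by blast
  have "c \<le> t0"
    unfolding t0_def using \<open>x0 \<in> A\<close>
  proof (intro cInf_greatest)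
    fix x assume x: "x \<in> A"
    show "c \<le> x"
    proof (rule ccontr)
      assume "\<not> c \<le> x"
      then have "x \<in> {t0..c}" using lower[OF x] by simp
      then show False using x \<open>{t0..c} \<subseteq> S\<close> by (auto simp: A_def)
    qed
  qed auto
  with \<open>c > t0\<close> show False by simp
qed

definition solves_ode :: "('a \<Rightarrow> ('a \<Rightarrow> real) \<Rightarrow> real) \<Rightarrow> 'a set \<Rightarrow> real \<Rightarrow> (real \<Rightarrow> 'a \<Rightarrow> real) \<Rightarrow> bool"
  where "solves_ode F X T u \<longleftrightarrow>
    (\<forall>t\<in>{0..T}. \<forall>a\<in>X. ((\<lambda>t. u t a) has_real_derivative F a (u t)) (at t within {0..T}))"

lemma solves_ode_continuous_on:
  "solves_ode F X T u \<Longrightarrow> a \<in> X \<Longrightarrow> continuous_on {0..T} (\<lambda>t. u t a)"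
  unfolding solves_ode_def continuous_on_eq_continuous_within by (blast intro: DERIV_continuous)

lemma solves_ode_l1_dist_growth:
  fixes t0 c L M t :: real
  assumes "finite X" "solves_ode F X T u" "solves_ode F X T v" "0 \<le> t0" "c \<le> T"
    and "\<forall>a\<in>X. u t0 a = v t0 a"
    and lip: "\<And>a r. a \<in> X \<Longrightarrow> r \<in> {t0..c} \<Longrightarrow> \<bar>F a (u r) - F a (v r)\<bar> \<le> L * l1_dist X (u r) (v r)"
    and bound: "\<And>r. r \<in> {t0..c} \<Longrightarrow> l1_dist X (u r) (v r) \<le> M" and "L \<ge> 0"
    and t: "t \<in> {t0..c}"
  shows "l1_dist X (u t) (v t) \<le> real (card X) * (L * M * (t - t0))"
proof (rule l1_dist_le_card)
  fix a assume a: "a \<in> X"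
  have "\<bar>(u t a - v t a) - (u t0 a - v t0 a)\<bar> \<le> (L * M) * \<bar>t - t0\<bar>"
  proof (rule DERIV_bound_Icc[where f = "\<lambda>r. u r a - v r a" and a = t0 and b = t])
    fix r assume r: "r \<in> {t0..t}"
    then have "r \<in> {0..T}" "{t0..t} \<subseteq> {0..T}" using t assms(4,5) by auto
    then have "((\<lambda>r. u r a - v r a) has_real_derivative F a (u r) - F a (v r)) (at r within {0..T})"
      using assms(2,3) a unfolding solves_ode_def by (intro DERIV_diff) auto
    then show "((\<lambda>r. u r a - v r a) has_real_derivative F a (u r) - F a (v r))
        (at r within {t0..t})"
      using \<open>{t0..t} \<subseteq> {0..T}\<close> by (rule DERIV_subset)
    have "r \<in> {t0..c}" using r t by auto
    then have "\<bar>F a (u r) - F a (v r)\<bar> \<le> L * l1_dist X (u r) (v r)"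
      by (rule lip[OF a])
    also have "\<dots> \<le> L * M"
      using bound[OF \<open>r \<in> {t0..c}\<close>] \<open>L \<ge> 0\<close> by (rule mult_left_mono)
    finally show "\<bar>F a (u r) - F a (v r)\<bar> \<le> L * M" .
  qed (use t in auto)
  then show "\<bar>u t a - v t a\<bar> \<le> L * M * (t - t0)"
    using assms(6) a t by simp
qed

lemma solves_ode_agree_short:
  fixes t0 c L :: real
  assumes X: "finite X" and u: "solves_ode F X T u" and v: "solves_ode F X T v"
    and c: "0 \<le> t0" "t0 \<le> c" "c \<le> T" and agree: "\<forall>a\<in>X. u t0 a = v t0 a"
    and lip: "\<And>a r. a \<in> X \<Longrightarrow> r \<in> {t0..c} \<Longrightarrow> \<bar>F a (u r) - F a (v r)\<bar> \<le> L * l1_dist X (u r) (v r)"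
    and L: "L \<ge> 0" and short: "card X * L * (c - t0) \<le> 1 / 2"
  shows "\<forall>t\<in>{t0..c}. \<forall>a\<in>X. u t a = v t a"
proof -
  define D where "D t = l1_dist X (u t) (v t)" for t
  have sub: "{t0..c} \<subseteq> {0..T}" using c by auto
  have "continuous_on {t0..c} D"
    unfolding D_def using X solves_ode_continuous_on[OF u] solves_ode_continuous_on[OF v]
    by (intro continuous_on_l1_dist continuous_on_subset[OF _ sub]) auto
  then obtain r0 where r0: "r0 \<in> {t0..c}" and max: "\<And>r. r \<in> {t0..c} \<Longrightarrow> D r \<le> D r0"
    using continuous_attains_sup[of "{t0..c}" D] c by auto
  \<comment> \<open>the maximal distance on the short interval is at most half of itself\<close>
  have "D r0 \<le> card X * (L * D r0 * (r0 - t0))"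
    unfolding D_def using X u v c agree lip max L r0
    by (intro solves_ode_l1_dist_growth[where c = c]) (auto simp: D_def)
  also have "\<dots> \<le> (card X * L * (c - t0)) * D r0"
    using r0 L l1_dist_nonneg[of X]
    by (simp add: D_def mult_left_mono mult_right_mono algebra_simps)
  also have "\<dots> \<le> D r0 / 2"
    using mult_right_mono[OF short l1_dist_nonneg[of X "u r0" "v r0"]] by (simp add: D_def)
  finally have "D r = 0" if "r \<in> {t0..c}" for r
    using max[OF that] l1_dist_nonneg[of X "u r" "v r"] by (simp add: D_def)
  then show ?thesis
    using X by (simp add: D_def l1_dist_eq_0_iff)
qed

lemma solves_ode_agree_forward:
  assumes X: "finite X" "\<And>a. a \<in> X \<Longrightarrow> locally_lipschitz X (F a)"
    and u: "solves_ode F X T u" and v: "solves_ode F X T v"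
    and t0: "0 \<le> t0" "t0 < T" and agree: "\<forall>a\<in>X. u t0 a = v t0 a"
  shows "\<exists>c>t0. c \<le> T \<and> (\<forall>t\<in>{t0..c}. \<forall>a\<in>X. u t a = v t a)"
proof -
  obtain \<delta> L where \<delta>: "\<delta> > 0" and L: "L \<ge> 0" and lip: "\<And>a v w. a \<in> X \<Longrightarrow>
      l1_dist X v (u t0) < \<delta> \<Longrightarrow> l1_dist X w (u t0) < \<delta> \<Longrightarrow> \<bar>F a v - F a w\<bar> \<le> L * l1_dist X v w"
    using locally_lipschitz_familyE[of X X F "u t0", OF X] by blast
  define E where "E t = l1_dist X (u t) (u t0) + l1_dist X (v t) (u t0)" for t
  have "continuous_on {0..T} E"
    unfolding E_def using X(1) solves_ode_continuous_on[OF u] solves_ode_continuous_on[OF v]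
    by (intro continuous_on_add continuous_on_l1_dist continuous_on_const) auto
  moreover have "E t0 = 0"
    using agree X(1) by (simp add: E_def l1_dist_eq_0_iff)
  ultimately obtain \<eta> where \<eta>: "\<eta> > 0" "\<forall>t\<in>{0..T}. dist t t0 < \<eta> \<longrightarrow> dist (E t) 0 < \<delta>"
    using t0 \<delta> unfolding continuous_on_iff by (metis atLeastAtMost_iff less_eq_real_def)
  define c where "c = min T (min (t0 + \<eta> / 2) (t0 + 1 / (2 * (card X * L + 1))))"
  have CL: "0 \<le> card X * L" using L by simp
  then have c: "t0 < c" "c \<le> T" using t0 \<eta> by (auto simp: c_def)
  have "card X * L * (c - t0) \<le> (card X * L + 1) * (1 / (2 * (card X * L + 1)))"
    using c CL by (intro mult_mono) (auto simp: c_def)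
  also have "\<dots> = 1 / 2" using CL by simp
  finally have short: "card X * L * (c - t0) \<le> 1 / 2" .
  have "\<bar>F a (u r) - F a (v r)\<bar> \<le> L * l1_dist X (u r) (v r)" if "a \<in> X" "r \<in> {t0..c}" for a r
  proof (rule lip[OF that(1)])
    have "r \<in> {0..T}" "dist r t0 < \<eta>" using that t0 c \<eta>(1) by (auto simp: c_def dist_real_def)
    then have "\<bar>E r\<bar> < \<delta>" using \<eta>(2) by (simp add: dist_real_def)
    then show "l1_dist X (u r) (u t0) < \<delta>" "l1_dist X (v r) (u t0) < \<delta>"
      using l1_dist_nonneg[of X "u r" "u t0"] l1_dist_nonneg[of X "v r" "u t0"]
      by (simp_all add: E_def)
  qed
  then have "\<forall>t\<in>{t0..c}. \<forall>a\<in>X. u t a = v t a"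
    using X(1) u v t0 c agree L short by (intro solves_ode_agree_short) auto
  then show ?thesis using c by blast
qed

lemma solves_ode_unique:
  assumes X: "finite X" "\<And>a. a \<in> X \<Longrightarrow> locally_lipschitz X (F a)"
    and u: "solves_ode F X T u" and v: "solves_ode F X T v"
    and "\<forall>a\<in>X. u 0 a = v 0 a" and t: "t \<in> {0..T}" and a: "a \<in> X"
  shows "u t a = v t a"
proof -
  define S where "S = {t \<in> {0..T}. l1_dist X (u t) (v t) = 0}"
  have "closed S"
    unfolding S_def using X(1) solves_ode_continuous_on[OF u] solves_ode_continuous_on[OF v]
    by (intro continuous_closed_preimage_constant continuous_on_l1_dist) auto
  moreover have "0 \<in> S"
    using assms(5) X(1) t by (simp add: S_def l1_dist_eq_0_iff)
  moreover have "\<exists>c>t0. {t0..c} \<subseteq> S" if t0: "0 \<le> t0" "t0 < T" and "{0..t0} \<subseteq> S" for t0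
  proof -
    have "\<forall>a\<in>X. u t0 a = v t0 a"
      using that X(1) by (auto simp: S_def l1_dist_eq_0_iff)
    then obtain c where "c > t0" "c \<le> T" "\<forall>t\<in>{t0..c}. \<forall>a\<in>X. u t a = v t a"
      using solves_ode_agree_forward[OF X u v t0] by blast
    then show ?thesis
      using t0 X(1) by (intro exI[of _ c]) (auto simp: S_def l1_dist_eq_0_iff)
  qed
  ultimately have "{0..T} \<subseteq> S"
    by (rule Icc_subset_closed_forward)
  then show ?thesis
    using t a X(1) by (auto simp: S_def l1_dist_eq_0_iff)
qed

section \<open>Existence of solutions by Picard iteration\<close>

lemma LIMSEQ_geometric_bound:
  fixes x :: "nat \<Rightarrow> real"
  assumes "\<And>k. \<bar>x k - l\<bar> \<le> K * (1/2) ^ k"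
  shows "x \<longlonglongrightarrow> l"
proof -
  have "(\<lambda>k. K * (1/2::real) ^ k) \<longlonglongrightarrow> 0"
    by (rule tendsto_mult_right_zero, rule LIMSEQ_realpow_zero) simp_all
  then have "(\<lambda>k. x k - l) \<longlonglongrightarrow> 0"
    by (rule Lim_null_comparison[rotated]) (simp add: assms always_eventually)
  then show ?thesis
    by (rule LIM_zero_cancel)
qed

lemma geometric_steps_convergent:
  fixes x :: "nat \<Rightarrow> real"
  assumes steps: "\<And>k. \<bar>x (Suc k) - x k\<bar> \<le> C * (1/2) ^ k"
  shows "x \<longlonglongrightarrow> lim x" and "\<bar>lim x - x k\<bar> \<le> 2 * C * (1/2) ^ k"
proof -
  have tail: "\<bar>x m - x k\<bar> \<le> 2 * C * (1/2) ^ k - 2 * C * (1/2) ^ m" if "k \<le> m" for k m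
    using that
  proof (induction m rule: dec_induct)
    case (step m)
    have "\<bar>x (Suc m) - x k\<bar> \<le> \<bar>x m - x k\<bar> + \<bar>x (Suc m) - x m\<bar>" by linarith
    moreover have "2 * C * (1/2) ^ Suc m = C * (1/2) ^ m" by simp
    ultimately show ?case using step.IH steps[of m] by linarith
  qed simp
  have "summable (\<lambda>j. x (Suc j) - x j)"
    using steps
    by (intro summable_comparison_test'[OF summable_mult[OF summable_geometric[of "1/2"]]]) auto
  then have "(\<lambda>k. x k - x 0) \<longlonglongrightarrow> (\<Sum>j. x (Suc j) - x j)"
    using summable_LIMSEQ[of "\<lambda>j. x (Suc j) - x j"] by (simp add: sum_lessThan_telescope)
  then have "(\<lambda>k. x k - x 0 + x 0) \<longlonglongrightarrow> (\<Sum>j. x (Suc j) - x j) + x 0"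
    by (intro tendsto_add tendsto_const)
  then show conv: "x \<longlonglongrightarrow> lim x"
    by (auto simp: convergent_LIMSEQ_iff[symmetric] convergent_def)
  have "C \<ge> 0" using steps[of 0] by simp
  have "(\<lambda>m. \<bar>x m - x k\<bar>) \<longlonglongrightarrow> \<bar>lim x - x k\<bar>"
    by (intro tendsto_intros conv)
  moreover have "\<forall>m\<ge>k. \<bar>x m - x k\<bar> \<le> 2 * C * (1/2) ^ k"
  proof (intro allI impI)
    fix m assume "k \<le> m"
    have "0 \<le> 2 * C * (1/2::real) ^ m" using \<open>C \<ge> 0\<close> by simp
    then show "\<bar>x m - x k\<bar> \<le> 2 * C * (1/2) ^ k" using tail[OF \<open>k \<le> m\<close>] by linarith
  qed
  ultimately show "\<bar>lim x - x k\<bar> \<le> 2 * C * (1/2) ^ k"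
    by (blast intro: LIMSEQ_le_const2)
qed

locale picard_iteration =
  fixes F :: "'a \<Rightarrow> ('a \<Rightarrow> real) \<Rightarrow> real" and X :: "'a set" and u0 :: "'a \<Rightarrow> real"
    and \<delta> L B T :: real
  assumes finite_X: "finite X"
    and lipschitz: "\<And>a v w. a \<in> X \<Longrightarrow> l1_dist X v u0 < \<delta> \<Longrightarrow> l1_dist X w u0 < \<delta> \<Longrightarrow>
      \<bar>F a v - F a w\<bar> \<le> L * l1_dist X v w"
    and bounded: "\<And>a v. a \<in> X \<Longrightarrow> l1_dist X v u0 < \<delta> \<Longrightarrow> \<bar>F a v\<bar> \<le> B"
    and nonneg: "0 \<le> L" "0 \<le> B" "0 \<le> T"
    and stays_in_ball: "card X * B * T < \<delta>"
    and contracts: "card X * L * T \<le> 1 / 2"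
begin

definition admissible_path :: "(real \<Rightarrow> 'a \<Rightarrow> real) \<Rightarrow> bool" where
  "admissible_path w \<longleftrightarrow> (\<forall>a\<in>X. w 0 a = u0 a) \<and>
    (\<forall>t\<in>{0..T}. \<forall>s\<in>{0..T}. \<forall>a\<in>X. \<bar>w t a - w s a\<bar> \<le> B * \<bar>t - s\<bar>)"

definition step :: "(real \<Rightarrow> 'a \<Rightarrow> real) \<Rightarrow> real \<Rightarrow> 'a \<Rightarrow> real" where
  "step w t a = u0 a + integral {0..t} (\<lambda>s. F a (w s))"

definition iterate :: "nat \<Rightarrow> real \<Rightarrow> 'a \<Rightarrow> real" where
  "iterate k = (step ^^ k) (\<lambda>_. u0)"

lemma admissible_path_dist_u0:
  assumes "admissible_path w" "t \<in> {0..T}"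
  shows "l1_dist X (w t) u0 \<le> card X * (B * T)"
proof (rule l1_dist_le_card)
  fix a assume "a \<in> X"
  then have "\<bar>w t a - u0 a\<bar> \<le> B * \<bar>t - 0\<bar>"
    using assms nonneg(3) unfolding admissible_path_def by (metis atLeastAtMost_iff order_refl)
  also have "\<dots> \<le> B * T" using assms(2) nonneg(2) by (intro mult_left_mono) auto
  finally show "\<bar>w t a - u0 a\<bar> \<le> B * T" .
qed

lemma admissible_path_in_ball: "admissible_path w \<Longrightarrow> t \<in> {0..T} \<Longrightarrow> l1_dist X (w t) u0 < \<delta>"
  using admissible_path_dist_u0 stays_in_ball by (simp add: mult.assoc) (meson le_less_trans)

lemma admissible_path_continuous:
  assumes "admissible_path w" "a \<in> X"
  shows "continuous_on {0..T} (\<lambda>s. F a (w s))"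
proof (rule lipschitz_on_continuous_on[OF lipschitz_onI])
  fix s r assume s: "s \<in> {0..T}" and r: "r \<in> {0..T}"
  have "\<bar>F a (w s) - F a (w r)\<bar> \<le> L * l1_dist X (w s) (w r)"
    using lipschitz[OF assms(2)] admissible_path_in_ball[OF assms(1)] s r by blast
  also have "l1_dist X (w s) (w r) \<le> card X * (B * \<bar>s - r\<bar>)"
    using assms(1) s r unfolding admissible_path_def by (intro l1_dist_le_card) blast
  then have "L * l1_dist X (w s) (w r) \<le> L * (card X * (B * \<bar>s - r\<bar>))"
    using nonneg(1) by (rule mult_left_mono)
  finally show "dist (F a (w s)) (F a (w r)) \<le> L * card X * B * dist s r"
    by (simp add: dist_real_def mult_ac)
qed (use nonneg in simp)

lemma step_has_derivative:
  assumes "admissible_path w" "a \<in> X" "t \<in> {0..T}"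
  shows "((\<lambda>t. step w t a) has_real_derivative F a (w t)) (at t within {0..T})"
  using DERIV_add[OF DERIV_const
      integral_has_real_derivative[OF admissible_path_continuous[OF assms(1,2)] assms(3)]]
  by (simp add: step_def)

lemma step_0 [simp]: "step w 0 a = u0 a"
  by (simp add: step_def)

lemma admissible_path_step:
  assumes "admissible_path w"
  shows "admissible_path (step w)"
  unfolding admissible_path_def
proof (intro conjI ballI)
  fix t s a assume "t \<in> {0..T}" "s \<in> {0..T}" "a \<in> X"
  then show "\<bar>step w t a - step w s a\<bar> \<le> B * \<bar>t - s\<bar>"
    using step_has_derivative[OF assms] bounded admissible_path_in_ball[OF assms]
    by (intro DERIV_bound_Icc[where f = "\<lambda>t. step w t a"]) auto
qed simp

lemma step_contraction:
  assumes w1: "admissible_path w1" and w2: "admissible_path w2"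
    and c: "\<And>s. s \<in> {0..T} \<Longrightarrow> l1_dist X (w1 s) (w2 s) \<le> c" and t: "t \<in> {0..T}"
  shows "l1_dist X (step w1 t) (step w2 t) \<le> c / 2"
proof -
  have "0 \<le> c"
    using c[of 0] nonneg(3) l1_dist_nonneg[of X] by (meson atLeastAtMost_iff order_refl order_trans)
  have "\<bar>step w1 t a - step w2 t a\<bar> \<le> L * c * T" if a: "a \<in> X" for a
  proof -
    have "\<bar>(step w1 t a - step w2 t a) - (step w1 0 a - step w2 0 a)\<bar> \<le> (L * c) * \<bar>t - 0\<bar>"
    proof (rule DERIV_bound_Icc[where f = "\<lambda>t. step w1 t a - step w2 t a" and a = 0 and b = T])
      fix s assume s: "s \<in> {0..T}"
      show "((\<lambda>t. step w1 t a - step w2 t a) has_real_derivative F a (w1 s) - F a (w2 s))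
          (at s within {0..T})"
        by (intro DERIV_diff step_has_derivative w1 w2 a s)
      have "\<bar>F a (w1 s) - F a (w2 s)\<bar> \<le> L * l1_dist X (w1 s) (w2 s)"
        using lipschitz[OF a] admissible_path_in_ball w1 w2 s by blast
      also have "\<dots> \<le> L * c" using c[OF s] nonneg(1) by (rule mult_left_mono)
      finally show "\<bar>F a (w1 s) - F a (w2 s)\<bar> \<le> L * c" .
    qed (use t nonneg in auto)
    also have "\<dots> \<le> L * c * T"
      using t nonneg(1) \<open>0 \<le> c\<close> by (intro mult_left_mono) auto
    finally show ?thesis by simp
  qed
  then have "l1_dist X (step w1 t) (step w2 t) \<le> card X * (L * c * T)"
    by (rule l1_dist_le_card)
  also have "\<dots> = (card X * L * T) * c" by simp
  also have "\<dots> \<le> 1 / 2 * c" using contracts \<open>0 \<le> c\<close> by (rule mult_right_mono)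
  finally show ?thesis by simp
qed

lemma iterate_Suc: "iterate (Suc k) = step (iterate k)"
  by (simp add: iterate_def)

lemma admissible_path_iterate: "admissible_path (iterate k)"
proof (induction k)
  case 0
  show ?case using nonneg(2) by (simp add: iterate_def admissible_path_def)
qed (simp add: iterate_Suc admissible_path_step)

lemma iterate_steps:
  "t \<in> {0..T} \<Longrightarrow> l1_dist X (iterate (Suc k) t) (iterate k t) \<le> card X * (B * T) * (1/2) ^ k"
proof (induction k arbitrary: t)
  case 0
  then show ?case
    using admissible_path_dist_u0[OF admissible_path_iterate[of 1]] by (simp add: iterate_def)
next
  case (Suc k)
  then show ?case
    using step_contraction[OF admissible_path_iterate admissible_path_iterate Suc.IH]
    by (simp add: iterate_Suc)
qed

definition limit_path :: "real \<Rightarrow> 'a \<Rightarrow> real" where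
  "limit_path t a = lim (\<lambda>k. iterate k t a)"

lemma iterate_tendsto_limit_path:
  assumes "t \<in> {0..T}" "a \<in> X"
  shows "(\<lambda>k. iterate k t a) \<longlonglongrightarrow> limit_path t a"
    and "\<bar>limit_path t a - iterate k t a\<bar> \<le> 2 * (card X * (B * T)) * (1/2) ^ k"
proof -
  have "\<bar>iterate (Suc k) t a - iterate k t a\<bar> \<le> card X * (B * T) * (1/2) ^ k" for k
    using abs_le_l1_dist[OF finite_X assms(2)] iterate_steps[OF assms(1)] by (rule order_trans)
  from geometric_steps_convergent[OF this]
  show "(\<lambda>k. iterate k t a) \<longlonglongrightarrow> limit_path t a"
    and "\<bar>limit_path t a - iterate k t a\<bar> \<le> 2 * (card X * (B * T)) * (1/2) ^ k"
    by (simp_all add: limit_path_def)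
qed

lemma admissible_path_limit_path: "admissible_path limit_path"
  unfolding admissible_path_def
proof (intro conjI ballI)
  fix a assume a: "a \<in> X"
  have "(\<lambda>k. iterate k 0 a) = (\<lambda>k. u0 a)"
    using admissible_path_iterate a by (simp add: admissible_path_def)
  then show "limit_path 0 a = u0 a"
    using iterate_tendsto_limit_path(1)[of 0 a] a nonneg(3) by (simp add: LIMSEQ_const_iff)
next
  fix t s a assume t: "t \<in> {0..T}" and s: "s \<in> {0..T}" and a: "a \<in> X"
  have "(\<lambda>k. \<bar>iterate k t a - iterate k s a\<bar>) \<longlonglongrightarrow> \<bar>limit_path t a - limit_path s a\<bar>"
    by (intro tendsto_intros iterate_tendsto_limit_path t s a)
  moreover have "\<forall>k. \<bar>iterate k t a - iterate k s a\<bar> \<le> B * \<bar>t - s\<bar>"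
    using admissible_path_iterate t s a by (simp add: admissible_path_def)
  ultimately show "\<bar>limit_path t a - limit_path s a\<bar> \<le> B * \<bar>t - s\<bar>"
    by (blast intro: LIMSEQ_le_const2)
qed

lemma step_limit_path:
  assumes t: "t \<in> {0..T}" and a: "a \<in> X"
  shows "step limit_path t a = limit_path t a"
proof (rule LIMSEQ_unique)
  show "(\<lambda>k. iterate (Suc k) t a) \<longlonglongrightarrow> limit_path t a"
    using iterate_tendsto_limit_path(1)[OF t a] by (rule LIMSEQ_Suc)
  define C where "C = card X * (B * T)"
  have "\<bar>iterate (Suc k) t a - step limit_path t a\<bar> \<le> (card X * C) * (1/2) ^ k" for k
  proof -
    have "l1_dist X (iterate k s) (limit_path s) \<le> card X * (2 * C * (1/2) ^ k)"
      if "s \<in> {0..T}" for s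
      using iterate_tendsto_limit_path(2)[OF that] unfolding C_def
      by (intro l1_dist_le_card) (simp add: abs_minus_commute)
    then have "l1_dist X (step (iterate k) t) (step limit_path t) \<le>
        card X * (2 * C * (1/2) ^ k) / 2"
      by (intro step_contraction admissible_path_iterate admissible_path_limit_path t)
    then show ?thesis
      using abs_le_l1_dist[OF finite_X a, of "step (iterate k) t" "step limit_path t"]
      by (simp add: iterate_Suc)
  qed
  then show "(\<lambda>k. iterate (Suc k) t a) \<longlonglongrightarrow> step limit_path t a"
    by (rule LIMSEQ_geometric_bound)
qed

lemma solves_ode_limit_path: "solves_ode F X T limit_path"
  unfolding solves_ode_def
proof (intro ballI)
  fix t a assume t: "t \<in> {0..T}" and a: "a \<in> X"
  show "((\<lambda>t. limit_path t a) has_real_derivative F a (limit_path t)) (at t within {0..T})"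
    using step_has_derivative[OF admissible_path_limit_path a t] zero_less_one t
    by (rule has_field_derivative_transform_within) (use step_limit_path a in simp)
qed

end


lemma solves_ode_exists:
  assumes X: "finite X" "\<And>a. a \<in> X \<Longrightarrow> locally_lipschitz X (F a)"
  obtains T u where "T > 0" "\<forall>a\<in>X. u 0 a = u0 a" "solves_ode F X T u"
proof -
  obtain \<delta> L where \<delta>: "\<delta> > 0" and L: "L \<ge> 0" and lip: "\<And>a v w. a \<in> X \<Longrightarrow>
      l1_dist X v u0 < \<delta> \<Longrightarrow> l1_dist X w u0 < \<delta> \<Longrightarrow> \<bar>F a v - F a w\<bar> \<le> L * l1_dist X v w"
    using locally_lipschitz_familyE[of X X F u0, OF X] by blast
  define B where "B = (\<Sum>a\<in>X. \<bar>F a u0\<bar>) + L * \<delta>"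
  have bounded: "\<bar>F a v\<bar> \<le> B" if a: "a \<in> X" and v: "l1_dist X v u0 < \<delta>" for a v
  proof -
    have "\<bar>F a v - F a u0\<bar> \<le> L * \<delta>"
      using lip[OF a v, of u0] \<delta> L mult_left_mono[of "l1_dist X v u0" \<delta> L] v by simp
    moreover have "\<bar>F a u0\<bar> \<le> (\<Sum>a\<in>X. \<bar>F a u0\<bar>)"
      using X(1) a by (intro member_le_sum) auto
    ultimately show ?thesis unfolding B_def by linarith
  qed
  have B: "B \<ge> 0" using \<delta> L by (simp add: B_def sum_nonneg)
  define T where "T = min (\<delta> / (2 * (card X * B + 1))) (1 / (2 * (card X * L + 1)))"
  have CB: "0 \<le> card X * B" and CL: "0 \<le> card X * L" using B L by simp_all
  have T: "T > 0" using \<delta> CB CL by (simp add: T_def)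
  have "card X * B * T \<le> (card X * B + 1) * (\<delta> / (2 * (card X * B + 1)))"
    using CB T by (intro mult_mono) (auto simp: T_def)
  also have "\<dots> = \<delta> / 2"
  proof -
    have "card X * B + 1 \<noteq> 0" using CB by linarith
    then show ?thesis by (simp add: field_simps)
  qed
  also have "\<dots> < \<delta>" using \<delta> by simp
  finally have ball: "card X * B * T < \<delta>" .
  have "card X * L * T \<le> (card X * L + 1) * (1 / (2 * (card X * L + 1)))"
    using CL T by (intro mult_mono) (auto simp: T_def)
  also have "\<dots> = 1 / 2" using CL by simp
  finally have contracts: "card X * L * T \<le> 1 / 2" .
  interpret picard_iteration F X u0 \<delta> L B T
    using X(1) lip bounded L B T ball contracts by unfold_locales auto
  show ?thesis
    using that T solves_ode_limit_path admissible_path_limit_path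
    by (auto simp: admissible_path_def)
qed

section \<open>Solutions of differential equations over states\<close>

definition ode_solution :: "('f \<Rightarrow> real list \<Rightarrow> real) \<Rightarrow> ('v \<times> ('v, 'f) trm) list \<Rightarrow>
    'v state \<Rightarrow> real \<Rightarrow> (real \<Rightarrow> 'v state) \<Rightarrow> bool" where
  "ode_solution I ode \<omega> T \<phi> \<longleftrightarrow> T \<ge> 0 \<and>
      (\<forall>v. v \<notin> Diff ` set (map fst ode) \<longrightarrow> \<phi> 0 v = \<omega> v) \<and>
      (\<forall>\<zeta>\<in>{0..T}.
         (\<forall>(x, f)\<in>set ode. \<phi> \<zeta> (Diff x) = eval I (\<phi> \<zeta>) f) \<and>
         (\<forall>v. v \<notin> Base ` set (map fst ode) \<longrightarrow> v \<notin> Diff ` set (map fst ode) \<longrightarrow> \<phi> \<zeta> v = \<phi> 0 v) \<and>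
         (T > 0 \<longrightarrow> (\<forall>x\<in>set (map fst ode).
            ((\<lambda>t. \<phi> t (Base x)) has_real_derivative \<phi> \<zeta> (Diff x)) (at \<zeta> within {0..T}))))"

lemma ode_rel_iff_ode_solution:
  "ode_rel I ode Q \<omega> \<nu> \<longleftrightarrow> (\<exists>T \<phi>. ode_solution I ode \<omega> T \<phi> \<and> \<phi> T = \<nu> \<and> (\<forall>\<zeta>\<in>{0..T}. Q (\<phi> \<zeta>)))"
  unfolding ode_rel_def ode_solution_def by blast

lemma ode_solutionI:
  assumes "0 \<le> T" "\<And>v. v \<notin> Diff ` fst ` set ode \<Longrightarrow> \<phi> 0 v = \<omega> v"
    and "\<And>\<zeta> x f. \<zeta> \<in> {0..T} \<Longrightarrow> (x, f) \<in> set ode \<Longrightarrow> \<phi> \<zeta> (Diff x) = eval I (\<phi> \<zeta>) f"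
    and "\<And>\<zeta> v. \<zeta> \<in> {0..T} \<Longrightarrow> v \<notin> Base ` fst ` set ode \<Longrightarrow> v \<notin> Diff ` fst ` set ode \<Longrightarrow>
      \<phi> \<zeta> v = \<phi> 0 v"
    and "\<And>\<zeta> x. \<zeta> \<in> {0..T} \<Longrightarrow> x \<in> fst ` set ode \<Longrightarrow>
      ((\<lambda>t. \<phi> t (Base x)) has_real_derivative \<phi> \<zeta> (Diff x)) (at \<zeta> within {0..T})"
  shows "ode_solution I ode \<omega> T \<phi>"
  using assms unfolding ode_solution_def by auto

lemma ode_solution_nonneg: "ode_solution I ode \<omega> T \<phi> \<Longrightarrow> 0 \<le> T"
  by (simp add: ode_solution_def)

lemma ode_solution_0:
  "ode_solution I ode \<omega> T \<phi> \<Longrightarrow> v \<notin> Diff ` fst ` set ode \<Longrightarrow> \<phi> 0 v = \<omega> v"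
  unfolding ode_solution_def by simp

lemma ode_solution_Base_0: "ode_solution I ode \<omega> T \<phi> \<Longrightarrow> \<phi> 0 (Base a) = \<omega> (Base a)"
  by (rule ode_solution_0) auto

lemma ode_solution_Diff:
  assumes "ode_solution I ode \<omega> T \<phi>" "t \<in> {0..T}" "(x, f) \<in> set ode"
  shows "\<phi> t (Diff x) = eval I (\<phi> t) f"
proof -
  have "\<forall>\<zeta>\<in>{0..T}. \<forall>(x, f)\<in>set ode. \<phi> \<zeta> (Diff x) = eval I (\<phi> \<zeta>) f"
    using assms(1) unfolding ode_solution_def by blast
  then show ?thesis using assms(2,3) by blast
qed

lemma ode_solution_const:
  assumes "ode_solution I ode \<omega> T \<phi>" "t \<in> {0..T}" "a \<notin> fst ` set ode"
  shows ode_solution_Base_const: "\<phi> t (Base a) = \<omega> (Base a)"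
    and ode_solution_Diff_const: "\<phi> t (Diff a) = \<omega> (Diff a)"
proof -
  have "\<forall>\<zeta>\<in>{0..T}. \<forall>v. v \<notin> Base ` set (map fst ode) \<longrightarrow> v \<notin> Diff ` set (map fst ode) \<longrightarrow>
      \<phi> \<zeta> v = \<phi> 0 v"
    using assms(1) unfolding ode_solution_def by blast
  then have "\<phi> t v = \<omega> v" if "v \<notin> Base ` fst ` set ode" "v \<notin> Diff ` fst ` set ode" for v
    using assms(2) that ode_solution_0[OF assms(1)] by simp
  then show "\<phi> t (Base a) = \<omega> (Base a)" "\<phi> t (Diff a) = \<omega> (Diff a)"
    using assms(3) by auto
qed

lemma ode_solution_derivative:
  assumes "ode_solution I ode \<omega> T \<phi>" "t \<in> {0..T}" "x \<in> fst ` set ode"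
  shows "((\<lambda>t. \<phi> t (Base x)) has_real_derivative \<phi> t (Diff x)) (at t within {0..T})"
proof (cases "T > 0")
  case True
  have "\<forall>\<zeta>\<in>{0..T}. T > 0 \<longrightarrow> (\<forall>x\<in>set (map fst ode).
      ((\<lambda>t. \<phi> t (Base x)) has_real_derivative \<phi> \<zeta> (Diff x)) (at \<zeta> within {0..T}))"
    using assms(1) unfolding ode_solution_def by blast
  moreover obtain f where "(x, f) \<in> set ode" using assms(3) by auto
  ultimately show ?thesis using True assms(2) by fastforce
next
  case False
  then have "T = 0" "t = 0" using assms(2) by auto
  then show ?thesis
    by (simp add: has_field_derivative_def has_derivative_within_singleton_iff
        bounded_linear_mult_right)
qed

lemma ode_solution_restrict:
  assumes "ode_solution I ode \<omega> T \<phi>" "0 \<le> S" "S \<le> T"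
  shows "ode_solution I ode \<omega> S \<phi>"
proof (rule ode_solutionI)
  fix \<zeta> x assume "\<zeta> \<in> {0..S}" "x \<in> fst ` set ode"
  then have "((\<lambda>t. \<phi> t (Base x)) has_real_derivative \<phi> \<zeta> (Diff x)) (at \<zeta> within {0..T})"
    using ode_solution_derivative[OF assms(1)] assms(3) by simp
  then show "((\<lambda>t. \<phi> t (Base x)) has_real_derivative \<phi> \<zeta> (Diff x)) (at \<zeta> within {0..S})"
    by (rule DERIV_subset) (use assms(3) in auto)
next
  fix \<zeta> x f assume "\<zeta> \<in> {0..S}" "(x, f) \<in> set ode"
  then show "\<phi> \<zeta> (Diff x) = eval I (\<phi> \<zeta>) f"
    using ode_solution_Diff[OF assms(1)] assms(3) by simp
next
  fix \<zeta> v assume "\<zeta> \<in> {0..S}" "v \<notin> Base ` fst ` set ode" "v \<notin> Diff ` fst ` set ode"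
  then show "\<phi> \<zeta> v = \<phi> 0 v"
    using ode_solution_const[OF assms(1), of \<zeta>] ode_solution_0[OF assms(1)] assms(3)
    by (cases v) (auto simp: image_iff)
qed (use assms ode_solution_0 in auto)

lemma ode_solution_continuous_Base:
  assumes "ode_solution I ode \<omega> T \<phi>"
  shows "continuous_on {0..T} (\<lambda>t. \<phi> t (Base a))"
proof (cases "a \<in> fst ` set ode")
  case True
  then show ?thesis
    using ode_solution_derivative[OF assms] unfolding continuous_on_eq_continuous_within
    by (blast intro: DERIV_continuous)
next
  case False
  show ?thesis
    by (rule continuous_on_eq[OF continuous_on_const])
      (simp add: ode_solution_Base_const[OF assms _ False])
qed

lemma ode_solution_continuous_eval:
  assumes smooth: "\<forall>g. smooth_len (ar g) (I g)"
    and "ode_solution I ode \<omega> T \<phi>" "dfree e" "wf_trm ar e"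
  shows "continuous_on {0..T} (\<lambda>t. eval I (\<phi> t) e)"
proof (rule locally_lipschitz_continuous_on[where h = "\<lambda>s. eval I s e" and p = \<phi>])
  show "locally_lipschitz (Base ` vars_trm e) (\<lambda>s. eval I s e)"
    using assms(3,4) by (intro eval_locally_lipschitz[OF smooth] finite_vars_trm) auto
  show "continuous_on {0..T} (\<lambda>t. \<phi> t v)" if "v \<in> Base ` vars_trm e" for v
    using that ode_solution_continuous_Base[OF assms(2)] by blast
qed (simp add: finite_vars_trm)

definition override_base :: "'v state \<Rightarrow> 'v set \<Rightarrow> ('v \<Rightarrow> real) \<Rightarrow> 'v state" where
  "override_base \<omega> X w v = (case v of Base a \<Rightarrow> if a \<in> X then w a else \<omega> v | Diff a \<Rightarrow> \<omega> v)"

lemma l1_dist_override_base: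
  assumes "finite V" "X \<subseteq> V"
  shows "l1_dist (Base ` V) (override_base \<omega> X w1) (override_base \<omega> X w2) = l1_dist X w1 w2"
proof -
  have "l1_dist (Base ` V) (override_base \<omega> X w1) (override_base \<omega> X w2) =
      (\<Sum>a\<in>V. \<bar>override_base \<omega> X w1 (Base a) - override_base \<omega> X w2 (Base a)\<bar>)"
    by (simp add: l1_dist_def sum.reindex inj_on_def)
  also have "\<dots> = l1_dist X w1 w2"
    unfolding l1_dist_def using assms
    by (intro sum.mono_neutral_cong_right) (auto simp: override_base_def)
  finally show ?thesis .
qed

lemma locally_lipschitz_pullback:
  assumes "locally_lipschitz W h" "\<And>w1 w2. l1_dist W (m w1) (m w2) = l1_dist V w1 w2"
  shows "locally_lipschitz V (\<lambda>w. h (m w))"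
  unfolding locally_lipschitz_def
proof
  fix u
  obtain \<delta> L where "\<delta> > 0" "L \<ge> 0" "\<And>v w. l1_dist W v (m u) < \<delta> \<Longrightarrow> l1_dist W w (m u) < \<delta> \<Longrightarrow>
      \<bar>h v - h w\<bar> \<le> L * l1_dist W v w"
    using locally_lipschitzE[OF assms(1), of "m u"] by blast
  then show "\<exists>\<delta>>0. \<exists>L\<ge>0. \<forall>v w. l1_dist V v u < \<delta> \<longrightarrow> l1_dist V w u < \<delta> \<longrightarrow>
      \<bar>h (m v) - h (m w)\<bar> \<le> L * l1_dist V v w"
    by (simp add: assms(2)[symmetric]) blast
qed

(* Only meaningful for x among the variables of ode: otherwise the (map_of ode x) is junk. *)
definition ode_field :: "('f \<Rightarrow> real list \<Rightarrow> real) \<Rightarrow> ('v \<times> ('v, 'f) trm) list \<Rightarrow> 'v state \<Rightarrow>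
    'v \<Rightarrow> ('v \<Rightarrow> real) \<Rightarrow> real" where
  "ode_field I ode \<omega> x w = eval I (override_base \<omega> (fst ` set ode) w) (the (map_of ode x))"

lemma ode_field_locally_lipschitz:
  assumes smooth: "\<forall>g. smooth_len (ar g) (I g)" and "wf_ode ar ode" "x \<in> fst ` set ode"
  shows "locally_lipschitz (fst ` set ode) (ode_field I ode \<omega> x)"
proof -
  define f where "f = the (map_of ode x)"
  have "(x, f) \<in> set ode"
    using assms(3) map_of_eq_None_iff[of ode x] by (auto simp: f_def dest: map_of_SomeD)
  then have f: "dfree f" "wf_trm ar f"
    using assms(2) by (auto simp: wf_ode_def)
  define V where "V = fst ` set ode \<union> vars_trm f"
  have V: "finite V" "fst ` set ode \<subseteq> V"
    by (auto simp: V_def finite_vars_trm)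
  have "locally_lipschitz (Base ` V) (\<lambda>s. eval I s f)"
    using f V by (intro eval_locally_lipschitz[OF smooth]) (auto simp: V_def)
  then show ?thesis
    unfolding ode_field_def f_def[symmetric] using l1_dist_override_base[OF V]
    by (rule locally_lipschitz_pullback)
qed

lemma ode_solution_override_base:
  assumes "ode_solution I ode \<omega> T \<phi>" "t \<in> {0..T}"
  shows "override_base \<omega> (fst ` set ode) (\<lambda>a. \<phi> t (Base a)) (Base v) = \<phi> t (Base v)"
  using ode_solution_Base_const[OF assms] by (simp add: override_base_def)

lemma ode_solution_solves_ode:
  assumes sol: "ode_solution I ode \<omega> T \<phi>"
    and ode: "distinct (map fst ode)" "\<forall>(x, f)\<in>set ode. dfree f"
  shows "solves_ode (ode_field I ode \<omega>) (fst ` set ode) T (\<lambda>t a. \<phi> t (Base a))"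
  unfolding solves_ode_def
proof (intro ballI)
  fix t x assume t: "t \<in> {0..T}" and x: "x \<in> fst ` set ode"
  then obtain f where f: "(x, f) \<in> set ode" by auto
  have "\<phi> t (Diff x) = eval I (\<phi> t) f"
    using ode_solution_Diff[OF sol t f] .
  also have "\<dots> = ode_field I ode \<omega> x (\<lambda>a. \<phi> t (Base a))"
    unfolding ode_field_def using f ode ode_solution_override_base[OF sol t]
    by (auto intro!: eval_cong_Base)
  finally show "((\<lambda>t. \<phi> t (Base x)) has_real_derivative ode_field I ode \<omega> x (\<lambda>a. \<phi> t (Base a)))
      (at t within {0..T})"
    using ode_solution_derivative[OF sol t x] by simp
qed

lemma solves_ode_ode_solution:
  assumes u: "solves_ode (ode_field I ode \<omega>) (fst ` set ode) T u"
    and u0: "\<forall>a\<in>fst ` set ode. u 0 a = \<omega> (Base a)" and "0 \<le> T"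
    and ode: "distinct (map fst ode)" "\<forall>(x, f)\<in>set ode. dfree f"
  shows "\<exists>\<phi>. ode_solution I ode \<omega> T \<phi>"
proof -
  let ?X = "fst ` set ode"
  define \<phi> where "\<phi> t v = (case v of Base a \<Rightarrow> override_base \<omega> ?X (u t) v
      | Diff x \<Rightarrow> if x \<in> ?X then ode_field I ode \<omega> x (u t) else \<omega> v)" for t v
  have "\<phi> \<zeta> (Diff x) = eval I (\<phi> \<zeta>) f" if "(x, f) \<in> set ode" for \<zeta> x f
  proof -
    have "\<phi> \<zeta> (Diff x) = eval I (override_base \<omega> ?X (u \<zeta>)) f"
      using that ode by (force simp: \<phi>_def ode_field_def)
    also have "\<dots> = eval I (\<phi> \<zeta>) f"
      using that ode by (intro eval_cong_Base) (auto simp: \<phi>_def)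
    finally show ?thesis .
  qed
  moreover have "\<phi> 0 v = \<omega> v" if "v \<notin> Diff ` ?X" for v
    using that u0 by (cases v) (auto simp: \<phi>_def override_base_def)
  moreover have "\<phi> \<zeta> v = \<phi> 0 v" if "v \<notin> Base ` ?X" "v \<notin> Diff ` ?X" for \<zeta> v
    using that by (cases v) (auto simp: \<phi>_def override_base_def)
  moreover have "((\<lambda>t. \<phi> t (Base x)) has_real_derivative \<phi> \<zeta> (Diff x)) (at \<zeta> within {0..T})"
    if "\<zeta> \<in> {0..T}" "x \<in> ?X" for \<zeta> x
  proof -
    have "((\<lambda>t. u t x) has_real_derivative ode_field I ode \<omega> x (u \<zeta>)) (at \<zeta> within {0..T})"
      using u that unfolding solves_ode_def by blast
    then show ?thesis using that(2) by (simp add: \<phi>_def override_base_def)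
  qed
  ultimately have "ode_solution I ode \<omega> T \<phi>"
    using \<open>0 \<le> T\<close> by (intro ode_solutionI) auto
  then show ?thesis by blast
qed

lemma ode_solution_exists:
  assumes smooth: "\<forall>g. smooth_len (ar g) (I g)" and "wf_ode ar ode"
  obtains T \<phi> where "T > 0" "ode_solution I ode \<omega> T \<phi>"
proof -
  have ode: "distinct (map fst ode)" "\<forall>(x, f)\<in>set ode. dfree f"
    using assms(2) by (auto simp: wf_ode_def)
  obtain T u where "T > 0" "\<forall>a\<in>fst ` set ode. u 0 a = \<omega> (Base a)"
      "solves_ode (ode_field I ode \<omega>) (fst ` set ode) T u"
    using solves_ode_exists[of "fst ` set ode" "ode_field I ode \<omega>" "\<lambda>a. \<omega> (Base a)"]
      ode_field_locally_lipschitz[OF assms] by blast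
  with ode show ?thesis
    using that solves_ode_ode_solution[of I ode \<omega> T u] by fastforce
qed

lemma ode_solution_unique:
  assumes smooth: "\<forall>g. smooth_len (ar g) (I g)" and "wf_ode ar ode"
    and sol1: "ode_solution I ode \<omega> T1 \<phi>1" and sol2: "ode_solution I ode \<omega> T2 \<phi>2"
    and t: "t \<in> {0..min T1 T2}"
  shows "\<phi>1 t = \<phi>2 t"
proof -
  let ?X = "fst ` set ode" and ?T = "min T1 T2"
  have ode: "distinct (map fst ode)" "\<forall>(x, f)\<in>set ode. dfree f"
    using assms(2) by (auto simp: wf_ode_def)
  have sol1': "ode_solution I ode \<omega> ?T \<phi>1" and sol2': "ode_solution I ode \<omega> ?T \<phi>2"
    using t by (auto intro: ode_solution_restrict[OF sol1] ode_solution_restrict[OF sol2])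
  have t1: "t \<in> {0..T1}" and t2: "t \<in> {0..T2}" using t by auto
  have Base: "\<phi>1 t (Base a) = \<phi>2 t (Base a)" for a
  proof (cases "a \<in> ?X")
    case True
    show ?thesis
    proof (rule solves_ode_unique[where u = "\<lambda>t a. \<phi>1 t (Base a)" and v = "\<lambda>t a. \<phi>2 t (Base a)"])
      show "\<And>a. a \<in> ?X \<Longrightarrow> locally_lipschitz ?X (ode_field I ode \<omega> a)"
        by (rule ode_field_locally_lipschitz[OF smooth assms(2)])
    qed (use True t ode ode_solution_solves_ode[OF sol1'] ode_solution_solves_ode[OF sol2']
          ode_solution_Base_0[OF sol1] ode_solution_Base_0[OF sol2] in auto)
  next
    case False
    then show ?thesis
      using ode_solution_Base_const[OF sol1 t1] ode_solution_Base_const[OF sol2 t2] by simp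
  qed
  have "\<phi>1 t (Diff x) = \<phi>2 t (Diff x)" for x
  proof (cases "x \<in> ?X")
    case True
    then obtain f where f: "(x, f) \<in> set ode" by auto
    then show ?thesis
      using ode_solution_Diff[OF sol1 t1 f] ode_solution_Diff[OF sol2 t2 f] ode Base
      by (auto intro: eval_cong_Base)
  next
    case False
    then show ?thesis
      using ode_solution_Diff_const[OF sol1 t1] ode_solution_Diff_const[OF sol2 t2] by simp
  qed
  with Base show ?thesis
    by (intro ext) (case_tac x; simp)
qed

lemma wf_ode_zip:
  assumes "length fs = length xs" "wf_ode ar (zip xs fs)"
  shows "distinct xs" and "\<And>f. f \<in> set fs \<Longrightarrow> dfree f \<and> wf_trm ar f"
proof -
  show "distinct xs" using assms unfolding wf_ode_def by simp
  fix f assume "f \<in> set fs"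
  then obtain i where "i < length fs" "f = fs ! i" by (auto simp: in_set_conv_nth)
  then have "(xs ! i, f) \<in> set (zip xs fs)" using assms(1) by (auto simp: in_set_zip)
  then show "dfree f \<and> wf_trm ar f" using assms(2) unfolding wf_ode_def by auto
qed

lemma fst_set_zip: "length fs = length xs \<Longrightarrow> fst ` set (zip xs fs) = set xs"
  by (metis map_fst_zip set_map)

section \<open>Time reversal\<close>

lemma DERIV_reflect_Icc:
  fixes g :: "real \<Rightarrow> real"
  assumes "(g has_real_derivative d) (at (T - t) within {0..T})" "t \<in> {0..T}"
  shows "((\<lambda>t. g (T - t)) has_real_derivative - d) (at t within {0..T})"
proof -
  have reflect: "(\<lambda>t. T - t) ` {0..T} = {0..T}"
    by (auto simp: image_iff intro!: bexI[where x = "T - x" for x])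
  have "((\<lambda>t. T - t) has_real_derivative -1) (at t within {0..T})"
    by (auto intro!: derivative_eq_intros)
  from DERIV_image_chain[of g d "\<lambda>t. T - t" t "{0..T}", unfolded reflect, OF assms(1) this]
  show ?thesis by (simp add: comp_def)
qed

(* s' is s with the values at xs moved to ys; it relates the trajectory at time T - t to the
   reversed trajectory at time t. *)
definition mirrored :: "'v list \<Rightarrow> 'v list \<Rightarrow> 'v state \<Rightarrow> 'v state \<Rightarrow> bool" where
  "mirrored xs ys s s' \<longleftrightarrow> (\<forall>i<length xs. s' (Base (ys ! i)) = s (Base (xs ! i))) \<and>
    (\<forall>v. v \<notin> set xs \<longrightarrow> v \<notin> set ys \<longrightarrow> s' (Base v) = s (Base v))"

lemma mirrored_commute: "length xs = length ys \<Longrightarrow> mirrored xs ys s s' \<longleftrightarrow> mirrored ys xs s' s"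
  by (auto simp: mirrored_def)

lemma ren_nth: "length xs = length ys \<Longrightarrow> distinct xs \<Longrightarrow> i < length xs \<Longrightarrow> ren xs ys (xs ! i) = ys ! i"
  by (simp add: ren_def map_of_zip_nth)

lemma ren_notin: "length xs = length ys \<Longrightarrow> v \<notin> set xs \<Longrightarrow> ren xs ys v = v"
  by (simp add: ren_def map_of_eq_None_iff[THEN iffD2] fst_set_zip)

lemma mirrored_ren:
  assumes "mirrored xs ys s s'" "length xs = length ys" "distinct xs" "v \<notin> set ys"
  shows "s' (Base (ren xs ys v)) = s (Base v)"
proof (cases "v \<in> set xs")
  case True
  then obtain i where "i < length xs" "v = xs ! i" by (auto simp: in_set_conv_nth)
  then show ?thesis using assms by (simp add: ren_nth mirrored_def)
next
  case False
  then show ?thesis using assms by (simp add: ren_notin mirrored_def)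
qed

lemma eval_rename_mirrored:
  assumes "mirrored xs ys s s'" "length xs = length ys" "distinct xs"
    and "dfree f" "vars_trm f \<inter> set ys = {}"
  shows "eval I s' (rename_trm (ren xs ys) f) = eval I s f"
  unfolding eval_rename_trm using assms by (intro eval_cong_Base) (auto intro!: mirrored_ren)

lemma sem_rename_mirrored:
  assumes "mirrored xs ys s s'" "length xs = length ys" "distinct xs"
    and "semianalytic Q" "vars_fml Q \<inter> set ys = {}"
  shows "sem I (rename_fml (ren xs ys) Q) s' = sem I Q s"
  unfolding sem_rename_fml[OF assms(4)] using assms
  by (intro sem_cong_Base) (auto intro!: mirrored_ren)

definition reverse_flow :: "'v list \<Rightarrow> 'v list \<Rightarrow> 'v state \<Rightarrow> real \<Rightarrow> (real \<Rightarrow> 'v state) \<Rightarrow>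
    real \<Rightarrow> 'v state" where
  "reverse_flow xs ys \<omega> T \<phi> t v = (case v of
      Base b \<Rightarrow> if b \<in> set ys then \<phi> (T - t) (Base (ren ys xs b)) else \<omega> v
    | Diff b \<Rightarrow> if b \<in> set ys then - \<phi> (T - t) (Diff (ren ys xs b)) else \<omega> v)"

context
  fixes xs ys :: "'v list" and fs gs :: "('v, 'f) trm list" and I \<omega> T \<phi>
  assumes len: "length fs = length xs" "length gs = length xs" "length ys = length xs"
    and dist: "distinct xs" "distinct ys" "set xs \<inter> set ys = {}"
    and sol: "ode_solution I (zip xs fs) \<omega> T \<phi>"
begin

lemma reverse_flow_Base:
    "i < length xs \<Longrightarrow> reverse_flow xs ys \<omega> T \<phi> t (Base (ys ! i)) = \<phi> (T - t) (Base (xs ! i))"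
  and reverse_flow_Diff:
    "i < length xs \<Longrightarrow> reverse_flow xs ys \<omega> T \<phi> t (Diff (ys ! i)) = - \<phi> (T - t) (Diff (xs ! i))"
  using len dist by (simp_all add: reverse_flow_def ren_nth)

lemma reverse_flow_other:
  "v \<notin> Base ` set ys \<Longrightarrow> v \<notin> Diff ` set ys \<Longrightarrow> reverse_flow xs ys \<omega> T \<phi> t v = \<omega> v"
  by (cases v) (auto simp: reverse_flow_def)

lemma mirrored_reverse_flow:
  assumes "t \<in> {0..T}"
  shows "mirrored xs ys (\<phi> (T - t)) (reverse_flow xs ys \<omega> T \<phi> t)"
proof -
  have "\<phi> (T - t) (Base v) = \<omega> (Base v)" if "v \<notin> set xs" for v
    using ode_solution_Base_const[OF sol, of "T - t" v] assms that len by (simp add: fst_set_zip)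
  then show ?thesis
    unfolding mirrored_def using reverse_flow_Base by (auto simp: reverse_flow_def)
qed

lemma ode_solution_reverse_flow:
  assumes field: "\<And>i s s'. i < length xs \<Longrightarrow> mirrored xs ys s s' \<Longrightarrow>
      eval I s' (gs ! i) = - eval I s (fs ! i)"
    and end_eq: "sem I (VecEq xs ys) (\<phi> T)"
  shows "ode_solution I (zip ys gs) \<omega> T (reverse_flow xs ys \<omega> T \<phi>)"
proof (rule ode_solutionI)
  have X: "fst ` set (zip xs fs) = set xs" "fst ` set (zip ys gs) = set ys"
    using len by (simp_all add: fst_set_zip)
  have ys_nth: "y \<in> set ys \<longleftrightarrow> (\<exists>i<length xs. y = ys ! i)" for y
    using len by (auto simp: in_set_conv_nth)
  show T: "0 \<le> T" by (rule ode_solution_nonneg[OF sol])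
  fix v assume v: "v \<notin> Diff ` fst ` set (zip ys gs)"
  show "reverse_flow xs ys \<omega> T \<phi> 0 v = \<omega> v"
  proof (cases "v \<in> Base ` set ys")
    case True
    then obtain i where i: "i < length xs" "v = Base (ys ! i)" using ys_nth by auto
    have "ys ! i \<notin> fst ` set (zip xs fs)" using i len dist X by (auto dest: nth_mem)
    then show ?thesis
      using i reverse_flow_Base end_eq len ode_solution_Base_const[OF sol, of T] T
      by (simp add: sem_VecEq)
  qed (use reverse_flow_other v X in auto)
next
  fix \<zeta> y g assume \<zeta>: "\<zeta> \<in> {0..T}" and "(y, g) \<in> set (zip ys gs)"
  then obtain i where i: "i < length xs" "y = ys ! i" "g = gs ! i"
    using len by (auto simp: in_set_zip)
  have "(xs ! i, fs ! i) \<in> set (zip xs fs)" using i len by (auto simp: in_set_zip)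
  then have "\<phi> (T - \<zeta>) (Diff (xs ! i)) = eval I (\<phi> (T - \<zeta>)) (fs ! i)"
    using ode_solution_Diff[OF sol] \<zeta> by simp
  then show "reverse_flow xs ys \<omega> T \<phi> \<zeta> (Diff y) = eval I (reverse_flow xs ys \<omega> T \<phi> \<zeta>) g"
    using i reverse_flow_Diff field[OF i(1) mirrored_reverse_flow[OF \<zeta>]] by simp
next
  fix \<zeta> v assume "v \<notin> Base ` fst ` set (zip ys gs)" "v \<notin> Diff ` fst ` set (zip ys gs)"
  then show "reverse_flow xs ys \<omega> T \<phi> \<zeta> v = reverse_flow xs ys \<omega> T \<phi> 0 v"
    using reverse_flow_other len by (simp add: fst_set_zip)
next
  fix \<zeta> y assume \<zeta>: "\<zeta> \<in> {0..T}" and "y \<in> fst ` set (zip ys gs)"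
  then obtain i where i: "i < length xs" "y = ys ! i"
    using len by (auto simp: fst_set_zip in_set_conv_nth)
  then have "xs ! i \<in> fst ` set (zip xs fs)" using len by (simp add: fst_set_zip)
  then have "((\<lambda>t. \<phi> t (Base (xs ! i))) has_real_derivative \<phi> (T - \<zeta>) (Diff (xs ! i)))
      (at (T - \<zeta>) within {0..T})"
    using ode_solution_derivative[OF sol] \<zeta> by simp
  from DERIV_reflect_Icc[OF this \<zeta>]
  show "((\<lambda>t. reverse_flow xs ys \<omega> T \<phi> t (Base y)) has_real_derivative
      reverse_flow xs ys \<omega> T \<phi> \<zeta> (Diff y)) (at \<zeta> within {0..T})"
    using i reverse_flow_Base reverse_flow_Diff by simp
qed

lemma reverse_flow_end: "sem I (VecEq ys xs) (reverse_flow xs ys \<omega> T \<phi> T)"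
proof -
  have "reverse_flow xs ys \<omega> T \<phi> T (Base (ys ! i)) = reverse_flow xs ys \<omega> T \<phi> T (Base (xs ! i))"
    if "i < length xs" for i
  proof -
    have "xs ! i \<notin> set ys" using that dist by (auto dest: nth_mem)
    then have "reverse_flow xs ys \<omega> T \<phi> T (Base (xs ! i)) = \<omega> (Base (xs ! i))"
      using reverse_flow_other by auto
    then show ?thesis using that reverse_flow_Base ode_solution_Base_0[OF sol] by simp
  qed
  then show ?thesis using len by (simp add: sem_VecEq)
qed

end

lemma ode_rel_time_reversal:
  assumes len: "length fs = length xs" "length gs = length xs" "length ys = length xs"
    and dist: "distinct xs" "distinct ys" "set xs \<inter> set ys = {}"
    and field: "\<And>i s s'. i < length xs \<Longrightarrow> mirrored xs ys s s' \<Longrightarrow>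
      eval I s' (gs ! i) = - eval I s (fs ! i)"
    and dom: "\<And>s s'. mirrored xs ys s s' \<Longrightarrow> Q s \<Longrightarrow> Q' s'"
    and rel: "ode_rel I (zip xs fs) Q \<omega> \<nu>" and fin: "sem I (VecEq xs ys) \<nu>"
  shows "\<exists>\<nu>'. ode_rel I (zip ys gs) Q' \<omega> \<nu>' \<and> sem I (VecEq ys xs) \<nu>'"
proof -
  obtain T \<phi> where sol: "ode_solution I (zip xs fs) \<omega> T \<phi>" and Q: "\<forall>\<zeta>\<in>{0..T}. Q (\<phi> \<zeta>)"
    and "\<phi> T = \<nu>"
    using rel by (auto simp: ode_rel_iff_ode_solution)
  note reversal = len dist sol
  have "\<forall>\<zeta>\<in>{0..T}. Q' (reverse_flow xs ys \<omega> T \<phi> \<zeta>)"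
  proof
    fix \<zeta> assume \<zeta>: "\<zeta> \<in> {0..T}"
    then have "Q (\<phi> (T - \<zeta>))" using Q by simp
    then show "Q' (reverse_flow xs ys \<omega> T \<phi> \<zeta>)"
      using dom mirrored_reverse_flow[OF reversal \<zeta>] by blast
  qed
  with ode_solution_reverse_flow[OF reversal field] reverse_flow_end[OF reversal] fin \<open>\<phi> T = \<nu>\<close>
  show ?thesis
    unfolding ode_rel_iff_ode_solution by blast
qed

section \<open>The three axioms\<close>

lemma sem_Dia_And_iff:
  assumes smooth: "\<forall>g. smooth_len (ar g) (I g)" and ode: "wf_ode ar ode"
  shows "sem I (Dia ode Q1 P) \<omega> \<and> sem I (Dia ode Q2 P) \<omega> \<longleftrightarrow> sem I (Dia ode (And Q1 Q2) P) \<omega>"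
proof
  assume "sem I (Dia ode Q1 P) \<omega> \<and> sem I (Dia ode Q2 P) \<omega>"
  then obtain T1 \<phi>1 T2 \<phi>2 where sol1: "ode_solution I ode \<omega> T1 \<phi>1" "\<forall>\<zeta>\<in>{0..T1}. sem I Q1 (\<phi>1 \<zeta>)"
      "sem I P (\<phi>1 T1)"
    and sol2: "ode_solution I ode \<omega> T2 \<phi>2" "\<forall>\<zeta>\<in>{0..T2}. sem I Q2 (\<phi>2 \<zeta>)" "sem I P (\<phi>2 T2)"
    by (auto simp: ode_rel_iff_ode_solution)
  have eq: "\<phi>1 t = \<phi>2 t" if "t \<in> {0..min T1 T2}" for t
    using ode_solution_unique[OF smooth ode sol1(1) sol2(1) that] .
  show "sem I (Dia ode (And Q1 Q2) P) \<omega>"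
  proof (cases "T1 \<le> T2")
    case True
    then have "\<forall>\<zeta>\<in>{0..T1}. sem I (And Q1 Q2) (\<phi>1 \<zeta>)"
      using sol1(2) sol2(2) eq by (auto simp: min_def)
    then show ?thesis using sol1 unfolding sem.simps ode_rel_iff_ode_solution by blast
  next
    case False
    then have "\<forall>\<zeta>\<in>{0..T2}. sem I (And Q1 Q2) (\<phi>2 \<zeta>)"
      using sol1(2) sol2(2) eq[symmetric] by (auto simp: min_def)
    then show ?thesis using sol2 unfolding sem.simps ode_rel_iff_ode_solution by blast
  qed
qed (auto simp: ode_rel_iff_ode_solution)

lemma ode_solution_leaves_while_positive:
  assumes smooth: "\<forall>g. smooth_len (ar g) (I g)"
    and sol: "ode_solution I ode \<omega> T \<phi>" and "T > 0"
    and x: "(x, f) \<in> set ode" "dfree f" "eval I \<omega> f \<noteq> 0"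
    and e: "dfree e" "wf_trm ar e" "eval I \<omega> e > 0"
  obtains T' where "0 < T'" "T' \<le> T" "\<forall>\<zeta>\<in>{0..T'}. eval I (\<phi> \<zeta>) e > 0" "\<phi> T' (Base x) \<noteq> \<omega> (Base x)"
proof -
  have \<phi>0: "eval I (\<phi> 0) g = eval I \<omega> g" if "dfree g" for g
    using that ode_solution_Base_0[OF sol] by (intro eval_cong_Base) auto
  have "((\<lambda>t. eval I (\<phi> t) e) \<longlongrightarrow> eval I (\<phi> 0) e) (at 0 within {0..T})"
    using ode_solution_continuous_eval[OF smooth sol e(1,2)] \<open>T > 0\<close>
    unfolding continuous_on_def by simp
  then have positive: "\<forall>\<^sub>F t in at 0 within {0..T}. eval I (\<phi> t) e > 0"
    using e(3) \<phi>0[OF e(1)] by (auto elim: order_tendstoD)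
  have "((\<lambda>t. \<phi> t (Base x)) has_real_derivative eval I \<omega> f) (at 0 within {0..T})"
    using ode_solution_derivative[OF sol _, of 0 x] ode_solution_Diff[OF sol _ x(1), of 0]
      \<phi>0[OF x(2)] x(1) \<open>T > 0\<close> by force
  then have "((\<lambda>t. (\<phi> t (Base x) - \<phi> 0 (Base x)) / (t - 0)) \<longlongrightarrow> eval I \<omega> f) (at 0 within {0..T})"
    by (simp add: has_field_derivative_iff)
  then have "\<forall>\<^sub>F t in at 0 within {0..T}. (\<phi> t (Base x) - \<phi> 0 (Base x)) / (t - 0) \<noteq> 0"
    using x(3) by (rule tendsto_imp_eventually_ne)
  then have moving: "\<forall>\<^sub>F t in at 0 within {0..T}. \<phi> t (Base x) \<noteq> \<omega> (Base x)"
    by eventually_elim (auto simp: ode_solution_Base_0[OF sol])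
  obtain d where d: "d > 0" and near: "\<And>t. t \<in> {0..T} \<Longrightarrow> t \<noteq> 0 \<Longrightarrow> dist t 0 < d \<Longrightarrow>
      eval I (\<phi> t) e > 0 \<and> \<phi> t (Base x) \<noteq> \<omega> (Base x)"
    using eventually_conj[OF positive moving] unfolding eventually_at by blast
  define T' where "T' = min T (d / 2)"
  have T': "0 < T'" "T' \<le> T" "T' < d" using \<open>T > 0\<close> d by (auto simp: T'_def)
  have "\<forall>\<zeta>\<in>{0..T'}. eval I (\<phi> \<zeta>) e > 0"
  proof
    fix \<zeta> assume "\<zeta> \<in> {0..T'}"
    then show "eval I (\<phi> \<zeta>) e > 0"
      using near[of \<zeta>] T' e(3) \<phi>0[OF e(1)] by (cases "\<zeta> = 0") (auto simp: dist_real_def)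
  qed
  moreover have "\<phi> T' (Base x) \<noteq> \<omega> (Base x)"
    using near[of T'] T' by (simp add: dist_real_def)
  ultimately show ?thesis using that T' by blast
qed

lemma sem_Dia_local_progress_iff:
  assumes smooth: "\<forall>g. smooth_len (ar g) (I g)"
    and ode: "length fs = length xs" "wf_ode ar (zip xs fs)"
    and ys: "length ys = length xs" "set ys \<inter> set xs = {}"
    and e: "dfree e" "wf_trm ar e"
    and moving: "\<exists>f\<in>set fs. eval I \<omega> f \<noteq> 0"
    and start: "sem I (VecEq xs ys) \<omega>"
  shows "sem I (Dia (zip xs fs) (Gt e (Const 0)) (Not (VecEq xs ys))) \<omega> \<longleftrightarrow> eval I \<omega> e > 0"
proof
  assume "sem I (Dia (zip xs fs) (Gt e (Const 0)) (Not (VecEq xs ys))) \<omega>"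
  then obtain T \<phi> where sol: "ode_solution I (zip xs fs) \<omega> T \<phi>" and "\<forall>\<zeta>\<in>{0..T}. eval I (\<phi> \<zeta>) e > 0"
    by (auto simp: ode_rel_iff_ode_solution)
  then have "eval I (\<phi> 0) e > 0"
    using ode_solution_nonneg[OF sol] by simp
  moreover have "eval I (\<phi> 0) e = eval I \<omega> e"
    using e(1) ode_solution_Base_0[OF sol] by (intro eval_cong_Base) auto
  ultimately show "eval I \<omega> e > 0" by simp
next
  assume pos: "eval I \<omega> e > 0"
  obtain i where i: "i < length xs" "eval I \<omega> (fs ! i) \<noteq> 0"
    using moving ode(1) by (metis in_set_conv_nth)
  have xf: "(xs ! i, fs ! i) \<in> set (zip xs fs)"
    using i ode(1) by (auto simp: in_set_zip)
  have "dfree (fs ! i)"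
    using wf_ode_zip[OF ode] i ode(1) by simp
  have "ys ! i \<in> set ys" using ys(1) i by simp
  then have y: "ys ! i \<notin> fst ` set (zip xs fs)"
    using ys(2) ode(1) by (auto simp: fst_set_zip)
  obtain T \<phi> where "T > 0" and sol: "ode_solution I (zip xs fs) \<omega> T \<phi>"
    using ode_solution_exists[OF smooth ode(2)] by blast
  then obtain T' where T': "0 < T'" "T' \<le> T" and "\<forall>\<zeta>\<in>{0..T'}. eval I (\<phi> \<zeta>) e > 0"
    and moved: "\<phi> T' (Base (xs ! i)) \<noteq> \<omega> (Base (xs ! i))"
    using ode_solution_leaves_while_positive[OF smooth sol _ xf \<open>dfree (fs ! i)\<close> i(2) e pos]
    by blast
  moreover have "ode_solution I (zip xs fs) \<omega> T' \<phi>"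
    using ode_solution_restrict[OF sol] T' by simp
  moreover have "\<not> sem I (VecEq xs ys) (\<phi> T')"
  proof -
    have "\<omega> (Base (xs ! i)) = \<omega> (Base (ys ! i))"
      using start ys(1) i by (simp add: sem_VecEq)
    moreover have "\<phi> T' (Base (ys ! i)) = \<omega> (Base (ys ! i))"
      using ode_solution_Base_const[OF sol _ y] T' by simp
    ultimately show ?thesis
      using moved ys(1) i by (auto simp: sem_VecEq)
  qed
  ultimately show "sem I (Dia (zip xs fs) (Gt e (Const 0)) (Not (VecEq xs ys))) \<omega>"
    by (auto simp: ode_rel_iff_ode_solution)
qed

lemma sem_Dia_reverse_iff:
  assumes len: "length fs = length xs" "length ys = length xs"
    and dist: "distinct xs" "distinct ys" "set ys \<inter> set xs = {}"
    and fresh: "\<forall>y\<in>set ys. y \<notin> (\<Union>f\<in>set fs. vars_trm f) \<and> y \<notin> vars_fml Q"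
    and dfree: "\<forall>f\<in>set fs. dfree f" and Q: "semianalytic Q"
  shows "sem I (Dia (zip xs fs) Q (VecEq xs ys)) \<omega> \<longleftrightarrow>
    sem I (Dia (zip ys (map (\<lambda>f. Neg (rename_trm (ren xs ys) f)) fs)) (rename_fml (ren xs ys) Q)
      (VecEq ys xs)) \<omega>"
proof -
  define gs where "gs = map (\<lambda>f. Neg (rename_trm (ren xs ys) f)) fs"
  have gs: "length gs = length xs" using len by (simp add: gs_def)
  have field: "eval I s' (gs ! i) = - eval I s (fs ! i)"
    if "i < length xs" "mirrored xs ys s s'" for i s s'
  proof -
    have "fs ! i \<in> set fs" using that(1) len by simp
    then have "eval I s' (rename_trm (ren xs ys) (fs ! i)) = eval I s (fs ! i)"
      using that(2) len dist dfree fresh by (intro eval_rename_mirrored) auto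
    then show ?thesis using that(1) len by (simp add: gs_def Neg_def)
  qed
  have dom: "sem I (rename_fml (ren xs ys) Q) s' = sem I Q s" if "mirrored xs ys s s'" for s s'
    using that len dist Q fresh by (intro sem_rename_mirrored) auto
  have dom': "\<And>s s'. mirrored xs ys s s' \<Longrightarrow> sem I Q s \<Longrightarrow> sem I (rename_fml (ren xs ys) Q) s'"
    using dom by simp
  have field': "\<And>i s s'. i < length ys \<Longrightarrow> mirrored ys xs s s' \<Longrightarrow>
      eval I s' (fs ! i) = - eval I s (gs ! i)"
  proof -
    fix i s s' assume "i < length ys" "mirrored ys xs s s'"
    then show "eval I s' (fs ! i) = - eval I s (gs ! i)"
      using field[of i s' s] len mirrored_commute[of xs ys s' s] by simp
  qed
  have dom'': "\<And>s s'. mirrored ys xs s s' \<Longrightarrow> sem I (rename_fml (ren xs ys) Q) s \<Longrightarrow> sem I Q s'"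
    using dom len mirrored_commute[of xs ys] by simp
  have disj: "set xs \<inter> set ys = {}" "set ys \<inter> set xs = {}" using dist(3) by blast+
  show ?thesis
    unfolding gs_def[symmetric]
  proof
    assume "sem I (Dia (zip xs fs) Q (VecEq xs ys)) \<omega>"
    then obtain \<nu> where "ode_rel I (zip xs fs) (sem I Q) \<omega> \<nu>" "sem I (VecEq xs ys) \<nu>" by auto
    from ode_rel_time_reversal[of fs xs gs ys I "sem I Q" "sem I (rename_fml (ren xs ys) Q)" \<omega> \<nu>,
        OF len(1) gs len(2) dist(1,2) disj(1) field dom' this]
    show "sem I (Dia (zip ys gs) (rename_fml (ren xs ys) Q) (VecEq ys xs)) \<omega>"
      by (simp only: sem.simps)
  next
    assume "sem I (Dia (zip ys gs) (rename_fml (ren xs ys) Q) (VecEq ys xs)) \<omega>"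
    then obtain \<nu> where "ode_rel I (zip ys gs) (sem I (rename_fml (ren xs ys) Q)) \<omega> \<nu>"
      "sem I (VecEq ys xs) \<nu>" by auto
    moreover have "length gs = length ys" "length fs = length ys" "length xs = length ys"
      using len gs by simp_all
    ultimately have "\<exists>\<nu>'. ode_rel I (zip xs fs) (sem I Q) \<omega> \<nu>' \<and> sem I (VecEq xs ys) \<nu>'"
      by (intro ode_rel_time_reversal[of gs ys fs xs I "sem I (rename_fml (ren xs ys) Q)" "sem I Q"
          \<omega> \<nu>,
        OF _ _ _ dist(2,1) disj(2) field' dom''])
    then show "sem I (Dia (zip xs fs) Q (VecEq xs ys)) \<omega>"
      by (simp only: sem.simps)
  qed
qed

lemma valid_Uniq:
  assumes "\<forall>g. smooth_len (ar g) (I g)" "wf_ode ar ode"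
  shows "valid I (Iff (And (Dia ode Q1 P) (Dia ode Q2 P)) (Dia ode (And Q1 Q2) P))"
  unfolding valid_def sem_Iff sem.simps(4) using sem_Dia_And_iff[OF assms] by blast

lemma valid_Cont:
  assumes "\<forall>g. smooth_len (ar g) (I g)"
    and "length fs = length xs" "wf_ode ar (zip xs fs)"
    and "length ys = length xs" "set ys \<inter> set xs = {}"
    and "dfree e" "wf_trm ar e" and moving: "\<forall>\<omega>. \<exists>f\<in>set fs. eval I \<omega> f \<noteq> 0"
  shows "valid I (Imp (VecEq xs ys)
    (Iff (Dia (zip xs fs) (Gt e (Const 0)) (Not (VecEq xs ys))) (Gt e (Const 0))))"
  unfolding valid_def sem_Imp sem_Iff
proof (intro allI impI)
  fix \<omega> assume "sem I (VecEq xs ys) \<omega>"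
  from sem_Dia_local_progress_iff[OF assms(1-7) moving[rule_format] this]
  show "sem I (Dia (zip xs fs) (Gt e (Const 0)) (Not (VecEq xs ys))) \<omega> \<longleftrightarrow>
      sem I (Gt e (Const 0)) \<omega>"
    by simp
qed

lemma valid_Dadj:
  assumes "length fs = length xs" "wf_ode ar (zip xs fs)"
    and "length ys = length xs" "distinct ys" "set ys \<inter> set xs = {}"
    and "\<forall>y\<in>set ys. y \<notin> (\<Union>f\<in>set fs. vars_trm f) \<and> y \<notin> vars_fml Q" "semianalytic Q"
  shows "valid I (Iff (Dia (zip xs fs) Q (VecEq xs ys))
    (Dia (zip ys (map (\<lambda>f. Neg (rename_trm (ren xs ys) f)) fs)) (rename_fml (ren xs ys) Q)
      (VecEq ys xs)))"
  unfolding valid_def sem_Iff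
  using assms wf_ode_zip[OF assms(1,2)] by (intro allI sem_Dia_reverse_iff) auto

theorem lemma5p1:
  fixes I :: "'f::finite \<Rightarrow> real list \<Rightarrow> real" and ar :: "'f \<Rightarrow> nat"
  assumes smooth: "\<forall>g. smooth_len (ar g) (I g)"
  shows
  \<comment> \<open>(Uniq)\<close>
  "(\<forall>(xs :: 'v list) fs Q1 Q2 P.
      length fs = length xs \<and> wf_ode ar (zip xs fs) \<and>
      semianalytic Q1 \<and> wf_fml ar Q1 \<and> semianalytic Q2 \<and> wf_fml ar Q2 \<and> wf_fml ar P \<longrightarrow>
      valid I (Iff (And (Dia (zip xs fs) Q1 P) (Dia (zip xs fs) Q2 P))
                   (Dia (zip xs fs) (And Q1 Q2) P)))
   \<and>
  \<comment> \<open>(Cont)\<close>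
   (\<forall>(xs :: 'v list) fs ys e.
      length fs = length xs \<and> wf_ode ar (zip xs fs) \<and>
      length ys = length xs \<and> distinct ys \<and> set ys \<inter> set xs = {} \<and>
      (\<forall>y\<in>set ys. y \<notin> (\<Union>f\<in>set fs. vars_trm f) \<and> y \<notin> vars_trm e) \<and>
      dfree e \<and> wf_trm ar e \<and>
      (\<forall>\<omega>. \<exists>f\<in>set fs. eval I \<omega> f \<noteq> 0) \<longrightarrow>
      valid I (Imp (VecEq xs ys)
                   (Iff (Dia (zip xs fs) (Gt e (Const 0)) (Not (VecEq xs ys)))
                        (Gt e (Const 0)))))
   \<and>
  \<comment> \<open>(Dadj)\<close>
   (\<forall>(xs :: 'v list) fs ys Q.
      length fs = length xs \<and> wf_ode ar (zip xs fs) \<and>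
      length ys = length xs \<and> distinct ys \<and> set ys \<inter> set xs = {} \<and>
      (\<forall>y\<in>set ys. y \<notin> (\<Union>f\<in>set fs. vars_trm f) \<and> y \<notin> vars_fml Q) \<and>
      semianalytic Q \<and> wf_fml ar Q \<longrightarrow>
      valid I (Iff (Dia (zip xs fs) Q (VecEq xs ys))
                   (Dia (zip ys (map (\<lambda>f. Neg (rename_trm (ren xs ys) f)) fs))
                        (rename_fml (ren xs ys) Q) (VecEq ys xs))))"
  by (intro conjI allI impI; elim conjE;
      rule valid_Uniq[OF smooth] valid_Cont[OF smooth] valid_Dadj; assumption)

end
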